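(* Let $Q$ be a nonzero quadratic form on $\mathbb{F}_{q_1}/\mathbb{F}_q$ with rank $r_Q$, and let \[\mathcal{C}_Q=\{(aQ(x)+\mathrm{Tr}_{q_2/q}(by))_{(x,y)\in\mathbb{F}^\star} : (a,b)\in\mathbb{F}_q\times\mathbb{F}_{q_2}\}.\] For each $r$ with $1\le r\le m_2+1$: (1) if $r_Q$ is even and $\epsilon=1$, then $d_r(\mathcal{C}_Q)=q^{M-r}\bigl(q^r-1-(q-1)q^{-r_Q/2}\bigr)$; (2) if $r_Q$ is even and $\epsilon=-1$, then $d_r(\mathcal{C}_Q)=q^{M-r}(q^r-1)$ for $1\le r<m_2+1$, and $d_r(\mathcal{C}_Q)=q^{M-r}\bigl(q^r-1+(q-1)q^{-r_Q/2}\bigr)$ for $r=m_2+1$; (3) if $r_Q$ is odd, then $d_r(\mathcal{C}_Q)=q^{M-r}(q^r-1)$.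
   Context: Let $p$ be an odd prime, $m\ge1$, $q=p^m$. Let $m_1,m_2$ be positive integers, $M=m_1+m_2$, $q_i=q^{m_i}$, $\mathbb{F}=\mathbb{F}_{q_1}\times\mathbb{F}_{q_2}$, $\mathbb{F}^\star=\mathbb{F}\setminus\{(0,0)\}$. $\mathrm{Tr}_{q^s/q}$ is the trace $\mathbb{F}_{q^s}\to\mathbb{F}_q$; $\eta$ is the quadratic character of $\mathbb{F}_q$ with $\eta(0)=0$. A quadratic form $Q$ on $\mathbb{F}_{q_1}/\mathbb{F}_q$ is a map $Q:\mathbb{F}_{q_1}\to\mathbb{F}_q$ with $Q(ax)=a^2Q(x)$ ($a\in\mathbb{F}_q$) such that $B_Q(x,y)=\frac12(Q(x+y)-Q(x)-Q(y))$ is $\mathbb{F}_q$-bilinear; its rank is $r_Q=m_1-\dim_{\mathbb{F}_q}\{x:B_Q(x,y)=0\ \forall y\}$. In suitable coordinates $Q=\sum_{i=1}^{r_Q}\lambda_ix_i^2$ with $\lambda_i\in\mathbb{F}_q^*$; $\varepsilon_Q=\eta(\lambda_1\cdots\lambda_{r_Q})$. Set $\epsilon=\varepsilon_Q(-1)^{(p-1)mr_Q/4}$ if $r_Q$ is even, $\epsilon=\varepsilon_Q(-1)^{(p-1)m(r_Q+1)/4}$ if $r_Q$ is odd. For a linear code $\mathcal{C}\subseteq\mathbb{F}_q^n$ of dimension $k$ and $1\le r\le k$, the $r$-th generalized Hamming weight is $d_r(\mathcal{C})=\min\{\#\mathrm{Supp}(K)\}$ over $r$-dimensional subspaces $K$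 of $\mathcal{C}$, where $\mathrm{Supp}(K)$ is the set of coordinates $i$ such that $c_i\neq0$ for some $c\in K$. *)

theory Defs
  imports Complex_Main "HOL-Computational_Algebra.Primes" "HOL-Library.Function_Algebras" "HOL-Library.FuncSet" "HOL-Library.Cardinality"
begin

text \<open>The base field F_q is a finite field type 'a (with CARD('a) = q).
  An extension field F_(q^s) is a finite field type 'b together with an injective ring
  homomorphism emb : 'a \<Rightarrow> 'b; it is an F_q-vector space via c \<cdot> x = emb c * x.\<close>

definition field_emb :: "('a::field \<Rightarrow> 'b::field) \<Rightarrow> bool" where
  "field_emb emb \<longleftrightarrow> inj emb \<and> emb 1 = 1 \<and>
     (\<forall>x y. emb (x + y) = emb x + emb y) \<and> (\<forall>x y. emb (x * y) = emb x * emb y)"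

definition escale :: "('a::field \<Rightarrow> 'b::field) \<Rightarrow> 'a \<Rightarrow> 'b \<Rightarrow> 'b" where
  "escale emb c x = emb c * x"

definition trace :: "('a::{field,finite} \<Rightarrow> 'b::field) \<Rightarrow> nat \<Rightarrow> 'b \<Rightarrow> 'a" where
  "trace emb s y = the_inv emb (\<Sum>i<s. y ^ (CARD('a) ^ i))"

definition eta :: "'a::field \<Rightarrow> int" where
  "eta x = (if x = 0 then 0 else if (\<exists>y. y ^ 2 = x) then 1 else -1)"

definition qf_bil :: "('b \<Rightarrow> 'a::field) \<Rightarrow> 'b::field \<Rightarrow> 'b \<Rightarrow> 'a" where
  "qf_bil Q x y = (Q (x + y) - Q x - Q y) / 2"

definition is_quadratic_form :: "('a::field \<Rightarrow> 'b::field) \<Rightarrow> ('b \<Rightarrow> 'a) \<Rightarrow> bool" where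
  "is_quadratic_form emb Q \<longleftrightarrow>
     (\<forall>a x. Q (emb a * x) = a ^ 2 * Q x) \<and>
     (\<forall>x x' y. qf_bil Q (x + x') y = qf_bil Q x y + qf_bil Q x' y) \<and>
     (\<forall>x y y'. qf_bil Q x (y + y') = qf_bil Q x y + qf_bil Q x y') \<and>
     (\<forall>a x y. qf_bil Q (emb a * x) y = a * qf_bil Q x y) \<and>
     (\<forall>a x y. qf_bil Q x (emb a * y) = a * qf_bil Q x y)"

definition qf_rank :: "('a::field \<Rightarrow> 'b::field) \<Rightarrow> nat \<Rightarrow> ('b \<Rightarrow> 'a) \<Rightarrow> nat" where
  "qf_rank emb m1 Q = m1 - vector_space.dim (escale emb) {x. \<forall>y. qf_bil Q x y = 0}"

definition qf_diag :: "('a::field \<Rightarrow> 'b::field) \<Rightarrow> nat \<Rightarrow> ('b \<Rightarrow> 'a)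
    \<Rightarrow> (nat \<Rightarrow> 'b) \<Rightarrow> (nat \<Rightarrow> 'a) \<Rightarrow> nat \<Rightarrow> bool" where
  "qf_diag emb m1 Q e lam r \<longleftrightarrow>
     (\<forall>x. \<exists>!c. c \<in> {..<m1} \<rightarrow>\<^sub>E UNIV \<and> x = (\<Sum>i<m1. emb (c i) * e i)) \<and>
     (\<forall>c. Q (\<Sum>i<m1. emb (c i) * e i) = (\<Sum>i<r. lam i * (c i) ^ 2)) \<and>
     (\<forall>i<r. lam i \<noteq> 0)"

definition qf_eps :: "('a::field \<Rightarrow> 'b::field) \<Rightarrow> nat \<Rightarrow> ('b \<Rightarrow> 'a) \<Rightarrow> int" where
  "qf_eps emb m1 Q =
     (let r = qf_rank emb m1 Q;
          lam = (SOME lam. \<exists>e. qf_diag emb m1 Q e lam r)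
      in eta (\<Prod>i<r. lam i))"

text \<open>The sign epsilon from the paper (p, m with q = p^m).\<close>
definition sign_eps :: "nat \<Rightarrow> nat \<Rightarrow> ('a::field \<Rightarrow> 'b::field) \<Rightarrow> nat \<Rightarrow> ('b \<Rightarrow> 'a) \<Rightarrow> int" where
  "sign_eps p m emb m1 Q =
     (let r = qf_rank emb m1 Q
      in qf_eps emb m1 Q *
         (-1) ^ (if even r then (p - 1) * m * r div 4 else (p - 1) * m * (r + 1) div 4))"

text \<open>Coordinates indexed by F* = F_(q1) x F_(q2) minus (0,0); codewords are functions
  on F_(q1) x F_(q2), set to 0 outside F*.\<close>
definition Fstar :: "('b::zero \<times> 'c::zero) set" where
  "Fstar = UNIV - {(0, 0)}"

definition code_Q :: "('a::{field,finite} \<Rightarrow> 'c::field) \<Rightarrow> nat \<Rightarrow> ('b::zero \<Rightarrow> 'a)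
    \<Rightarrow> ('b \<times> 'c \<Rightarrow> 'a) set" where
  "code_Q emb2 m2 Q =
     {(\<lambda>(x, y). if (x, y) \<in> Fstar then a * Q x + trace emb2 m2 (b * y) else 0) | a b. True}"

definition fscale :: "'a::field \<Rightarrow> ('i \<Rightarrow> 'a) \<Rightarrow> ('i \<Rightarrow> 'a)" where
  "fscale c f = (\<lambda>i. c * f i)"

definition supp_sub :: "'i set \<Rightarrow> ('i \<Rightarrow> 'a::zero) set \<Rightarrow> 'i set" where
  "supp_sub I K = {i \<in> I. \<exists>c \<in> K. c i \<noteq> 0}"

definition ghw :: "'i set \<Rightarrow> ('i \<Rightarrow> 'a::field) set \<Rightarrow> nat \<Rightarrow> nat" where
  "ghw I C r = Min {card (supp_sub I K) | K. K \<subseteq> C \<and> module.subspace fscale K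
                                          \<and> vector_space.dim fscale K = r}"

end

theory Submission
  imports Defs "HOL-Computational_Algebra.Polynomial"
begin

text \<open>A codeword of \<open>C_Q\<close> is \<open>c_(a,b)(x, y) = a Q(x) + Tr(b y)\<close>. Since the trace is balanced,
  every \<open>c_(a,b)\<close> with \<open>b \<noteq> 0\<close> has weight \<open>q^(M-1) (q - 1)\<close>, while \<open>c_(a,0)\<close> with \<open>a \<noteq> 0\<close> has
  weight \<open>(q^m1 - N) q^m2\<close>, where \<open>N\<close> is the number of zeros of \<open>Q\<close>. Diagonalising \<open>Q\<close> and
  counting solutions of diagonal equations with the quadratic character gives
  \<open>N = q^(m1-1) + \<epsilon> (q - 1) q^(m1-1-r_Q/2)\<close> for even \<open>r_Q\<close> and \<open>N = q^(m1-1)\<close> for odd \<open>r_Q\<close>.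

  For an \<open>r\<close>-dimensional subcode \<open>K\<close>, counting the pairs \<open>(c, i)\<close> with \<open>c_i \<noteq> 0\<close> shows that
  \<open>|Supp K| (q^r - q^(r-1))\<close> is the total weight of \<open>K\<close>, which only depends on whether \<open>K\<close>
  contains \<open>Q = c_(1,0)\<close>. So \<open>|Supp K|\<close> is either \<open>q^(M-r) (q^r - 1)\<close> or that value minus
  \<open>(N - q^(m1-1)) q^(m2+1-r)\<close>. Both kinds of subcode exist for \<open>r \<le> m2\<close>, whereas every
  subcode of dimension \<open>m2 + 1\<close> contains \<open>Q\<close>; taking the minimum gives the theorem.\<close>

section \<open>Finite fields\<close>

lemma card_field_ge_2: "CARD('a::{field,finite}) \<ge> 2"
proof -
  have "card {0, 1::'a} \<le> CARD('a)" by (rule card_mono) auto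
  thus ?thesis by simp
qed

lemma real_card_gt_1: "real CARD('a::{field,finite}) > 1"
  using card_field_ge_2[where 'a='a] by simp

lemma power_card_minus_one_eq_1:
  fixes x :: "'a::{field,finite}"
  assumes "x \<noteq> 0"
  shows "x ^ (CARD('a) - 1) = 1"
proof -
  let ?U = "UNIV - {0::'a}"
  have "bij_betw ((*) x) ?U ?U"
    using assms by (intro bij_betwI[where g = "(*) (inverse x)"]) auto
  hence "(\<Prod>y\<in>?U. x * y) = \<Prod>?U" by (rule prod.reindex_bij_betw)
  hence "x ^ card ?U * \<Prod>?U = 1 * \<Prod>?U" by (simp add: prod.distrib)
  moreover have "\<Prod>?U \<noteq> 0" by simp
  ultimately show ?thesis by (simp add: card_Diff_singleton)
qed

lemma power_card_eq_self: "x ^ CARD('a) = (x::'a::{field,finite})"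
proof (cases "x = 0")
  case False
  have "x ^ CARD('a) = x * x ^ (CARD('a) - 1)"
    using card_field_ge_2[where 'a='a] by (simp flip: power_Suc)
  thus ?thesis using power_card_minus_one_eq_1[OF False] by simp
qed simp

lemma power_card_power_eq_self: "x ^ (CARD('a) ^ n) = (x::'a::{field,finite})"
  by (induction n) (simp_all add: power_card_eq_self power_mult)

lemma of_nat_card_eq_0: "of_nat CARD('a::{field,finite}) = (0::'a)"
proof -
  have "(\<Sum>y\<in>UNIV. y + (1::'a)) = (\<Sum>y\<in>UNIV. y)"
    by (rule sum.reindex_bij_witness[of _ "\<lambda>y. y - 1" "\<lambda>y. y + 1"]) auto
  thus ?thesis by (simp add: sum.distrib)
qed

lemma prime_CHAR_finite: "prime CHAR('a::{field,finite})"
  by (rule prime_CHAR_semidom) (simp add: finite_imp_CHAR_pos)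

lemma CHAR_dvd_card: "CHAR('a::{field,finite}) dvd CARD('a)"
  by (simp add: of_nat_card_eq_0 flip: of_nat_eq_0_iff_char_dvd)

lemma CHAR_eq_if_card_eq_prime_power:
  assumes "prime p" and "CARD('a::{field,finite}) = p ^ m"
  shows "CHAR('a) = p"
proof -
  have "CHAR('a) dvd p ^ m"
    using CHAR_dvd_card[where 'a='a] assms(2) by simp
  hence "CHAR('a) dvd p" using prime_CHAR_finite[where 'a='a] prime_dvd_power by blast
  thus ?thesis using primes_dvd_imp_eq[OF prime_CHAR_finite[where 'a='a] assms(1)] by simp
qed

section \<open>The quadratic character\<close>

lemma eta_0 [simp]: "eta 0 = 0"
  unfolding eta_def by simp

context
  assumes odd_card: "odd CARD('a::{field,finite})"
begin

lemma two_neq_zero: "(2::'a) \<noteq> 0"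
proof
  assume "(2::'a) = 0"
  hence "CHAR('a) dvd 2" by (metis of_nat_eq_0_iff_char_dvd of_nat_numeral)
  hence "CHAR('a) = 2" using primes_dvd_imp_eq[OF prime_CHAR_finite[where 'a='a] two_is_prime_nat] by simp
  thus False using CHAR_dvd_card[where 'a='a] odd_card by simp
qed

lemma one_neq_minus_one: "(1::'a) \<noteq> -1"
  using two_neq_zero by (metis add_eq_0_iff one_add_one)

lemma card_ge_3: "CARD('a) \<ge> 3"
  using card_field_ge_2[where 'a='a] odd_card by presburger

lemma square_eq_square_iff: "(u::'a)^2 = y^2 \<longleftrightarrow> u = y \<or> u = -y"
proof -
  have "u^2 - y^2 = (u - y) * (u + y)" by (simp add: power2_eq_square algebra_simps)
  thus ?thesis by (auto simp: eq_iff_diff_eq_0[of "u^2"] eq_neg_iff_add_eq_0)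
qed

lemma card_square_roots: "int (card {u. u^2 = (a::'a)}) = 1 + eta a"
proof (cases "\<exists>y. y^2 = a")
  case True
  then obtain y where y: "y^2 = a" by blast
  have roots: "{u. u^2 = a} = {y, -y}" using square_eq_square_iff[of _ y] y by auto
  show ?thesis
  proof (cases "a = 0")
    case False
    hence "y \<noteq> -y" using y two_neq_zero by (metis add_eq_0_iff mult_2 mult_eq_0_iff zero_power2)
    thus ?thesis using roots False True unfolding eta_def by simp
  qed (use roots y in \<open>simp add: eta_def\<close>)
qed (force simp: eta_def)

lemma card_nonzero_squares: "2 * card {x::'a. x \<noteq> 0 \<and> (\<exists>y. y^2 = x)} = CARD('a) - 1"
proof -
  let ?S = "{x::'a. x \<noteq> 0 \<and> (\<exists>y. y^2 = x)}"
  have "CARD('a) - 1 = card (UNIV - {0::'a})" by (simp add: card_Diff_singleton)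
  also have "UNIV - {0::'a} = (\<Union>s\<in>?S. {u. u^2 = s})" by auto
  also have "card \<dots> = (\<Sum>s\<in>?S. card {u. u^2 = s})" by (rule card_UN_disjoint) auto
  also have "\<dots> = (\<Sum>s\<in>?S. 2)"
  proof (rule sum.cong)
    fix s assume "s \<in> ?S"
    hence "int (card {u. u^2 = s}) = 2" by (simp add: card_square_roots eta_def)
    thus "card {u. u^2 = s} = 2" by linarith
  qed simp
  finally show ?thesis by simp
qed

text \<open>Euler's criterion, proved by counting the roots of \<open>X^((q-1)/2) - 1\<close>: the
  \<open>(q-1)/2\<close> nonzero squares already exhaust them.\<close>

lemma euler_criterion:
  assumes "x \<noteq> (0::'a)"
  shows "x ^ ((CARD('a) - 1) div 2) = (if \<exists>y. y^2 = x then 1 else -1)"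
proof -
  define k where "k = (CARD('a) - 1) div 2"
  let ?S = "{x::'a. x \<noteq> 0 \<and> (\<exists>y. y^2 = x)}"
  have two_k: "2 * k = CARD('a) - 1" using odd_card unfolding k_def by presburger
  have k_pos: "k \<ge> 1" using card_ge_3 two_k by linarith
  define P :: "'a poly" where "P = monom 1 k - 1"
  have "coeff P k = 1" using k_pos unfolding P_def by (simp add: coeff_monom)
  hence P_nz: "P \<noteq> 0" by auto
  have "degree P \<le> k" unfolding P_def
    by (metis degree_diff_le degree_monom_le degree_1 le0)
  hence roots_bound: "card {z. poly P z = 0} \<le> k"
    using card_poly_roots_bound[OF P_nz] by linarith
  have poly_P: "poly P z = z ^ k - 1" for z unfolding P_def by (simp add: poly_monom)
  have squares_roots: "?S \<subseteq> {z. poly P z = 0}"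
  proof
    fix z assume "z \<in> ?S"
    then obtain y where "y^2 = z" "y \<noteq> 0" by auto
    hence "z ^ k = y ^ (2 * k)" by (simp add: power_mult)
    thus "z \<in> {z. poly P z = 0}" using power_card_minus_one_eq_1[OF \<open>y \<noteq> 0\<close>] poly_P two_k by simp
  qed
  have card_S: "card ?S = k" using card_nonzero_squares two_k by linarith
  show ?thesis
  proof (cases "\<exists>y. y^2 = x")
    case True
    thus ?thesis using assms squares_roots poly_P unfolding k_def by auto
  next
    case False
    have "x ^ k \<noteq> 1"
    proof
      assume "x ^ k = 1"
      hence "insert x ?S \<subseteq> {z. poly P z = 0}" using squares_roots poly_P by auto
      hence "card (insert x ?S) \<le> k"
        using card_mono[OF poly_roots_finite[OF P_nz]] roots_bound by (meson le_trans)
      thus False using False card_S by simp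
    qed
    moreover have "(x ^ k)^2 = 1^2"
      using power_card_minus_one_eq_1[OF assms] two_k by (simp add: power_mult[symmetric] mult.commute)
    hence "x ^ k = 1 \<or> x ^ k = -1" by (simp only: square_eq_square_iff)
    ultimately show ?thesis using False unfolding k_def by simp
  qed
qed

lemma of_int_eta: "of_int (eta x) = (x::'a) ^ ((CARD('a) - 1) div 2)"
proof -
  have "(CARD('a) - 1) div 2 \<noteq> 0" using card_ge_3 by linarith
  thus ?thesis using euler_criterion[of x] unfolding eta_def by auto
qed

lemma of_int_eta_inject:
  assumes "a \<in> {-1,0,1}" "b \<in> {-1,0,1}" "(of_int a :: 'a) = of_int b"
  shows "a = b"
proof -
  have "(0::'a) \<noteq> 1" "(0::'a) \<noteq> -1" "(1::'a) \<noteq> -1" using one_neq_minus_one by auto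
  thus ?thesis using assms by auto
qed

lemma eta_cases: "eta (x::'a) \<in> {-1,0,1}" unfolding eta_def by auto

lemma eta_mult: "eta ((x::'a) * y) = eta x * eta y"
proof (rule of_int_eta_inject[OF eta_cases])
  show "eta x * eta y \<in> {-1,0,1}" using eta_cases[of x] eta_cases[of y] by auto
qed (simp add: of_int_eta power_mult_distrib)

lemma eta_minus_one: "eta (-1::'a) = (-1) ^ ((CARD('a) - 1) div 2)"
proof (rule of_int_eta_inject[OF eta_cases])
  show "(-1::int) ^ ((CARD('a) - 1) div 2) \<in> {-1,0,1}" by (cases "even ((CARD('a) - 1) div 2)") auto
qed (simp add: of_int_eta)

lemma eta_one: "eta (1::'a) = 1"
  unfolding eta_def by (auto intro: exI[of _ 1])

lemma eta_power: "eta ((x::'a) ^ n) = eta x ^ n"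
  by (induction n) (simp_all add: eta_one eta_mult)

lemma eta_square: "(x::'a) \<noteq> 0 \<Longrightarrow> eta (x^2) = 1"
  unfolding eta_def by auto

text \<open>The substitution \<open>(u, t) \<mapsto> (u - t, u + t)\<close> turns the conic \<open>u^2 = t^2 + a\<close> into the
  hyperbola \<open>v w = a\<close>, which has \<open>q - 1\<close> points.\<close>

lemma sum_eta_square_plus:
  assumes "(a::'a) \<noteq> 0"
  shows "(\<Sum>t\<in>UNIV. eta (t^2 + a)) = -1"
proof -
  define X where "X = {(u, t). u^2 = t^2 + (a::'a)}"
  define H where "H = {(v, w). v * w = (a::'a)}"
  define f where "f = (\<lambda>(v, w). ((v + w) / 2, (w - v) / (2::'a)))"
  have "X = (\<lambda>(t, u). (u, t)) ` (SIGMA t:UNIV. {u. u^2 = t^2 + a})"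
    unfolding X_def by auto
  hence "int (card X) = (\<Sum>t\<in>UNIV. int (card {u. u^2 = t^2 + a}))"
    by (simp add: card_image inj_on_def)
  also have "\<dots> = int CARD('a) + (\<Sum>t\<in>UNIV. eta (t^2 + a))"
    by (simp add: card_square_roots sum.distrib)
  finally have card_X: "int (card X) = int CARD('a) + (\<Sum>t\<in>UNIV. eta (t^2 + a))" .
  have four_nz: "(4::'a) \<noteq> 0"
    using two_neq_zero by (metis mult_eq_0_iff num_double numeral_times_numeral)
  have "X = f ` H"
  proof (rule set_eqI, rule iffI)
    fix z assume "z \<in> X"
    then obtain u t where "z = (u, t)" "u^2 = t^2 + a" unfolding X_def by auto
    moreover have "f (u - t, u + t) = (u, t)"
      using two_neq_zero by (simp add: f_def field_simps)
    ultimately show "z \<in> f ` H"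
      unfolding H_def by (intro image_eqI[of _ _ "(u - t, u + t)"]) (auto simp: algebra_simps power2_eq_square)
  next
    fix z assume "z \<in> f ` H"
    then obtain v w where z: "z = f (v, w)" and vw: "v * w = a" unfolding H_def by auto
    have "(v + w)^2 = (w - v)^2 + 4 * (v * w)" by (simp add: power2_eq_square algebra_simps)
    hence "(v + w)^2 / 4 = (w - v)^2 / 4 + v * w"
      using four_nz by (simp add: add_divide_distrib)
    thus "z \<in> X" using four_nz unfolding X_def z f_def vw by (simp add: power_divide)
  qed
  moreover have "inj_on f H"
  proof (rule inj_on_inverseI)
    fix z :: "'a \<times> 'a"
    obtain v w where "z = (v, w)" by fastforce
    thus "(\<lambda>(u, t). (u - t, u + t)) (f z) = z"
      using two_neq_zero four_nz by (simp add: f_def field_simps)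
  qed
  ultimately have "card X = card H" by (simp add: card_image)
  also have "H = (\<lambda>v. (v, a / v)) ` (UNIV - {0})"
    using assms unfolding H_def by (auto simp: field_simps)
  also have "card \<dots> = CARD('a) - 1"
    by (subst card_image) (auto simp: inj_on_def card_Diff_singleton)
  finally have "card X = CARD('a) - 1" .
  thus ?thesis using card_X card_ge_3 by linarith
qed

lemma sum_eta_affine_square:
  assumes "(b::'a) \<noteq> 0"
  shows "(\<Sum>t\<in>UNIV. eta (a + b * t^2)) = (if a = 0 then (int CARD('a) - 1) * eta b else - eta b)"
proof (cases "a = 0")
  case True
  have "(\<Sum>t\<in>UNIV. eta (a + b * t^2)) = (\<Sum>t\<in>UNIV. if t = (0::'a) then 0 else eta b)"
    by (rule sum.cong) (auto simp: True eta_mult eta_square)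
  also have "\<dots> = (\<Sum>t\<in>UNIV - {0::'a}. eta b)"
    by (rule sum.mono_neutral_cong_right) auto
  finally show ?thesis using True by (simp add: card_Diff_singleton of_nat_diff)
next
  case False
  have "(\<Sum>t\<in>UNIV. eta (a + b * t^2)) = (\<Sum>t\<in>UNIV. eta b * eta (t^2 + a / b))"
  proof (rule sum.cong)
    fix t :: 'a
    have "a + b * t^2 = b * (t^2 + a / b)" using assms by (simp add: field_simps)
    thus "eta (a + b * t^2) = eta b * eta (t^2 + a / b)" by (simp add: eta_mult)
  qed simp
  also have "\<dots> = - eta b"
    using sum_eta_square_plus[of "a / b"] False assms by (simp flip: sum_distrib_left)
  finally show ?thesis using False by simp
qed

end

lemma minus_one_power_half_pred_power:
  assumes "odd (p::nat)"
  shows "(-1::int) ^ ((p ^ m - 1) div 2) = (-1) ^ ((p - 1) div 2 * m)"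
proof (induction m)
  case (Suc m)
  define a where "a = (p - 1) div 2"
  define f where "f = (p ^ m - 1) div 2"
  have p: "p = 2 * a + 1" using assms unfolding a_def by presburger
  have "odd (p ^ m)" using assms by simp
  hence "p ^ m = 2 * f + 1" unfolding f_def by presburger
  hence "p ^ Suc m = 2 * (p * f + a) + 1" using p by (simp add: algebra_simps)
  hence "(p ^ Suc m - 1) div 2 = 2 * (a * f) + (f + a)" using p by (simp add: algebra_simps)
  hence "(-1::int) ^ ((p ^ Suc m - 1) div 2) = (-1) ^ f * (-1) ^ a"
    by (simp add: power_add power_mult)
  also have "\<dots> = (-1) ^ ((p - 1) div 2 * Suc m)"
    using Suc.IH unfolding f_def a_def by (simp add: power_add mult.commute)
  finally show ?case .
qed simp

lemma eta_minus_one_prime_power: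
  assumes "odd p" and "CARD('a::{field,finite}) = p ^ m"
  shows "eta (-1::'a) = (-1) ^ ((p - 1) div 2 * m)"
proof -
  have odd_card: "odd CARD('a)" using assms by simp
  show ?thesis
    using eta_minus_one[OF odd_card] minus_one_power_half_pred_power[OF assms(1), of m] assms(2) by simp
qed

text \<open>For even \<open>r_Q\<close> the sign \<open>\<epsilon>\<close> of the paper is \<open>\<eta>(-1)^(r_Q/2) \<epsilon>_Q\<close>, because
  \<open>\<eta>(-1) = (-1)^((q-1)/2)\<close> and \<open>(q - 1)/2 \<equiv> m (p - 1)/2 (mod 2)\<close>.\<close>

lemma sign_eps_even_rank:
  fixes emb :: "'a::{field,finite} \<Rightarrow> 'b::field"
  assumes "odd p" and "CARD('a) = p ^ m" and "even (qf_rank emb n Q)"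
  shows "sign_eps p m emb n Q = eta (-1::'a) ^ (qf_rank emb n Q div 2) * qf_eps emb n Q"
proof -
  define h where "h = qf_rank emb n Q div 2"
  have "qf_rank emb n Q = 2 * h" using assms(3) unfolding h_def by simp
  moreover have "p - 1 = 2 * ((p - 1) div 2)" using assms(1) by presburger
  ultimately have four: "(p - 1) * m * qf_rank emb n Q = 4 * ((p - 1) div 2 * m * h)"
    by (metis mult.assoc mult.left_commute num_double numeral_times_numeral)
  hence "(p - 1) * m * qf_rank emb n Q div 4 = (p - 1) div 2 * m * h" unfolding four by simp
  hence "sign_eps p m emb n Q = qf_eps emb n Q * (-1) ^ ((p - 1) div 2 * m * h)"
    unfolding sign_eps_def Let_def using assms(3) by simp
  also have "(-1::int) ^ ((p - 1) div 2 * m * h) = eta (-1::'a) ^ h"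
    by (simp add: power_mult eta_minus_one_prime_power[OF assms(1,2)])
  finally show ?thesis unfolding h_def by (simp add: mult.commute)
qed

section \<open>Counting solutions of diagonal equations\<close>

lemma card_PiE_lessThan_Suc_filter:
  "card {x \<in> {..<Suc n} \<rightarrow>\<^sub>E (UNIV::'a::finite set). P x} =
     (\<Sum>s\<in>UNIV. card {x \<in> {..<n} \<rightarrow>\<^sub>E (UNIV::'a set). P (x(n := s))})"
proof -
  let ?f = "\<lambda>(s, x). x(n := s)"
  let ?S = "SIGMA s:(UNIV::'a set). {x \<in> {..<n} \<rightarrow>\<^sub>E (UNIV::'a set). P (x(n := s))}"
  have "{x \<in> {..<Suc n} \<rightarrow>\<^sub>E (UNIV::'a set). P x} = ?f ` ?S"
    unfolding lessThan_Suc PiE_insert_eq by auto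
  moreover have "inj_on ?f ?S"
    by (rule inj_on_subset[OF inj_combinator[of n "{..<n}" "\<lambda>_. UNIV"]]) auto
  ultimately have "card {x \<in> {..<Suc n} \<rightarrow>\<^sub>E (UNIV::'a set). P x} = card ?S"
    by (simp add: card_image)
  also have "\<dots> = (\<Sum>s\<in>UNIV. card {x \<in> {..<n} \<rightarrow>\<^sub>E (UNIV::'a set). P (x(n := s))})"
    by (rule card_SigmaI) (auto intro!: finite_subset[where B="{..<n} \<rightarrow>\<^sub>E UNIV"] finite_PiE)
  finally show ?thesis .
qed

definition diag_count :: "(nat \<Rightarrow> 'a::{field,finite}) \<Rightarrow> nat \<Rightarrow> 'a \<Rightarrow> nat" where
  "diag_count lam r c = card {x \<in> {..<r} \<rightarrow>\<^sub>E (UNIV::'a set). (\<Sum>i<r. lam i * x i ^ 2) = c}"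

lemma diag_count_0: "diag_count lam 0 c = (if c = 0 then 1 else 0)"
  unfolding diag_count_def by simp

lemma diag_count_Suc: "diag_count lam (Suc r) c = (\<Sum>s\<in>UNIV. diag_count lam r (c - lam r * s^2))"
  unfolding diag_count_def
proof (subst card_PiE_lessThan_Suc_filter, rule sum.cong[OF refl])
  fix s
  have "(\<Sum>i<Suc r. lam i * (x(r := s)) i ^ 2) = (\<Sum>i<r. lam i * x i ^ 2) + lam r * s^2" for x
    by (simp add: sum.cong[of "{..<r}" "{..<r}" "\<lambda>i. lam i * (x(r := s)) i ^ 2"])
  thus "card {x \<in> {..<r} \<rightarrow>\<^sub>E UNIV. (\<Sum>i<Suc r. lam i * (x(r := s)) i ^ 2) = c} =
        card {x \<in> {..<r} \<rightarrow>\<^sub>E UNIV. (\<Sum>i<r. lam i * x i ^ 2) = c - lam r * s^2}"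
    by (simp add: eq_diff_eq)
qed

lemma card_diag_solutions_extend:
  assumes "r \<le> n"
  shows "card {x \<in> {..<n} \<rightarrow>\<^sub>E (UNIV::'a::{field,finite} set). (\<Sum>i<r. lam i * x i ^ 2) = c}
         = CARD('a) ^ (n - r) * diag_count lam r c"
  using assms
proof (induction n)
  case (Suc n)
  show ?case
  proof (cases "r = Suc n")
    case False
    hence r: "r \<le> n" using Suc.prems by simp
    have "(\<Sum>i<r. lam i * (x(n := s)) i ^ 2) = (\<Sum>i<r. lam i * x i ^ 2)" for x :: "nat \<Rightarrow> 'a" and s
      by (rule sum.cong) (use r in auto)
    hence "card {x \<in> {..<Suc n} \<rightarrow>\<^sub>E (UNIV::'a set). (\<Sum>i<r. lam i * x i ^ 2) = c}
       = CARD('a) * card {x \<in> {..<n} \<rightarrow>\<^sub>E (UNIV::'a set). (\<Sum>i<r. lam i * x i ^ 2) = c}"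
      by (simp add: card_PiE_lessThan_Suc_filter)
    thus ?thesis using Suc.IH[OF r] r by (simp add: Suc_diff_le)
  qed (simp add: diag_count_def)
qed (simp add: diag_count_def)

lemma sum_if_card:
  "(\<Sum>s\<in>(UNIV::'a::finite set). if P s then (q::real) - 1 else -1) = q * card {s. P s} - CARD('a)"
proof -
  have "(\<Sum>s\<in>(UNIV::'a set). if P s then q - 1 else -1) = (\<Sum>s\<in>(UNIV::'a set). (if P s then q else 0) - 1)"
    by (rule sum.cong) auto
  thus ?thesis by (simp add: sum_subtractf sum.If_cases)
qed

context
  assumes odd_card: "odd CARD('a::{field,finite})"
begin

lemma diag_count_Suc_even_step:
  assumes "lam r \<noteq> (0::'a)"
    and IH: "\<And>c. real (diag_count lam r c) = real CARD('a) ^ r / real CARD('a)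
               + E * real CARD('a) ^ (r div 2) / real CARD('a) * (if c = 0 then real CARD('a) - 1 else -1)"
  shows "real (diag_count lam (Suc r) c) =
           real CARD('a) ^ r + E * real_of_int (eta (lam r * c)) * real CARD('a) ^ (r div 2)"
proof -
  define q where "q = real CARD('a)"
  define l where "l = lam r"
  have "q > 0" unfolding q_def by simp
  have "real (diag_count lam (Suc r) c) = (\<Sum>s\<in>UNIV. q ^ r / q + E * q ^ (r div 2) / q
          * (if c - l * s^2 = 0 then q - 1 else -1))"
    using IH unfolding q_def l_def by (simp add: diag_count_Suc)
  also have "\<dots> = q * (q ^ r / q) + E * q ^ (r div 2) / q *
          (\<Sum>s\<in>UNIV. (if c - l * s^2 = 0 then q - 1 else -1))"
    by (simp add: sum.distrib sum_distrib_left q_def)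
  also have "(\<Sum>s\<in>(UNIV::'a set). (if c - l * s^2 = 0 then q - 1 else -1)) = q * card {s. c - l * s^2 = 0} - q"
    by (simp add: sum_if_card q_def)
  also have "{s. c - l * s^2 = 0} = {s. s^2 = c / l}" using assms(1) by (auto simp: l_def field_simps)
  also have "real (card {s. s^2 = c / l}) = 1 + real_of_int (eta (l * c))"
  proof -
    have "c / l = (l * c) * (inverse l)^2" using assms(1) by (simp add: l_def field_simps power2_eq_square)
    hence "eta (c / l) = eta (l * c)"
      using assms(1) by (simp add: l_def eta_mult[OF odd_card] eta_square[OF odd_card])
    thus ?thesis using card_square_roots[OF odd_card, of "c / l"] by simp
  qed
  finally show ?thesis using \<open>q > 0\<close> unfolding q_def l_def by (simp add: field_simps)
qed

lemma diag_count_Suc_odd_step: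
  assumes "lam r \<noteq> (0::'a)" and "mu \<noteq> 0"
    and IH: "\<And>c. real (diag_count lam r c) = real CARD('a) ^ r / real CARD('a)
               + real_of_int (eta (mu * c)) * real CARD('a) ^ (r div 2)"
  shows "real (diag_count lam (Suc r) c) = real CARD('a) ^ r
           + real CARD('a) ^ (r div 2) * real_of_int (eta (- mu * lam r)) * (if c = 0 then real CARD('a) - 1 else -1)"
proof -
  define q where "q = real CARD('a)"
  have "q > 0" unfolding q_def by simp
  have "real (diag_count lam (Suc r) c) =
      (\<Sum>s\<in>UNIV. q ^ r / q + real_of_int (eta (mu * (c - lam r * s^2))) * q ^ (r div 2))"
    using IH unfolding q_def by (simp add: diag_count_Suc)
  also have "\<dots> = q * (q ^ r / q) + q ^ (r div 2) * real_of_int (\<Sum>s\<in>UNIV. eta (mu * c + (- mu * lam r) * s^2))"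
    by (simp add: sum.distrib sum_distrib_left q_def algebra_simps)
  also have "(\<Sum>s\<in>UNIV. eta (mu * c + (- mu * lam r) * s^2)) =
       (if mu * c = 0 then (int CARD('a) - 1) * eta (- mu * lam r) else - eta (- mu * lam r))"
    by (rule sum_eta_affine_square[OF odd_card]) (use assms in auto)
  finally show ?thesis using \<open>q > 0\<close> \<open>mu \<noteq> 0\<close> unfolding q_def by simp
qed

text \<open>The classical count of Lidl and Niederreiter (Theorems 6.26 and 6.27). The divisions
  by \<open>q\<close> avoid truncated subtraction in the exponents \<open>r - 1\<close> and \<open>r/2 - 1\<close>.\<close>

lemma diag_count_formula:
  assumes "\<forall>i<r. lam i \<noteq> (0::'a)"
  shows "real (diag_count lam r c) =
     (if even r then real CARD('a) ^ r / real CARD('a) +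
         real_of_int (eta ((-1) ^ (r div 2) * prod lam {..<r})) * real CARD('a) ^ (r div 2) / real CARD('a)
          * (if c = 0 then real CARD('a) - 1 else -1)
      else real CARD('a) ^ r / real CARD('a) +
         real_of_int (eta ((-1) ^ (r div 2) * prod lam {..<r} * c)) * real CARD('a) ^ (r div 2))"
  using assms
proof (induction r arbitrary: c)
  case 0
  have "real CARD('a) > 0" by simp
  thus ?case by (simp add: diag_count_0 eta_one[OF odd_card] field_simps)
next
  case (Suc r)
  have "real CARD('a) > 0" by simp
  have lam_r: "lam r \<noteq> 0" using Suc.prems by simp
  have prod_Suc: "prod lam {..<Suc r} = prod lam {..<r} * lam r" by simp
  show ?case
  proof (cases "even r")
    case True
    have "real (diag_count lam (Suc r) c) = real CARD('a) ^ r
        + real_of_int (eta ((-1) ^ (r div 2) * prod lam {..<r})) * real_of_int (eta (lam r * c)) * real CARD('a) ^ (r div 2)"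
      by (rule diag_count_Suc_even_step[where lam = lam and r = r, OF lam_r]) (use Suc True in simp)
    thus ?thesis using True \<open>real CARD('a) > 0\<close>
      by (simp add: field_simps prod_Suc eta_mult[OF odd_card] mult.assoc)
  next
    case False
    have "real (diag_count lam (Suc r) c) = real CARD('a) ^ r + real CARD('a) ^ (r div 2)
        * real_of_int (eta (- ((-1) ^ (r div 2) * prod lam {..<r}) * lam r)) * (if c = 0 then real CARD('a) - 1 else -1)"
      by (rule diag_count_Suc_odd_step[where lam = lam and r = r, OF lam_r]) (use Suc False in \<open>simp_all add: mult.assoc\<close>)
    moreover have "Suc r div 2 = Suc (r div 2)" using False by presburger
    ultimately show ?thesis using False \<open>real CARD('a) > 0\<close> by (simp add: field_simps prod_Suc)
  qed
qed

end

section \<open>Counting vectors in finite vector spaces\<close>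

lemma (in vector_space) bij_betw_coeffs_span:
  fixes e :: "nat \<Rightarrow> 'b"
  assumes inj: "inj_on e {..<n}" and ind: "independent (e ` {..<n})"
  shows "bij_betw (\<lambda>c. \<Sum>i<n. c i *s e i) ({..<n} \<rightarrow>\<^sub>E UNIV) (span (e ` {..<n}))"
proof (rule bij_betwI')
  fix c d :: "nat \<Rightarrow> 'a" assume c: "c \<in> {..<n} \<rightarrow>\<^sub>E UNIV" and d: "d \<in> {..<n} \<rightarrow>\<^sub>E UNIV"
  show "((\<Sum>i<n. c i *s e i) = (\<Sum>i<n. d i *s e i)) = (c = d)"
  proof
    assume eq: "(\<Sum>i<n. c i *s e i) = (\<Sum>i<n. d i *s e i)"
    define u where "u v = c (the_inv_into {..<n} e v) - d (the_inv_into {..<n} e v)" for v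
    have "(\<Sum>v\<in>e ` {..<n}. u v *s v) = (\<Sum>i<n. u (e i) *s e i)"
      by (rule sum.reindex[OF inj, unfolded comp_def])
    also have "\<dots> = (\<Sum>i<n. c i *s e i) - (\<Sum>i<n. d i *s e i)"
      by (simp add: u_def the_inv_into_f_f[OF inj] scale_left_diff_distrib sum_subtractf)
    finally have zero: "(\<Sum>v\<in>e ` {..<n}. u v *s v) = 0" using eq by simp
    have "u (e i) = 0" if "i < n" for i using independentD[OF ind _ _ zero] that by auto
    hence "c i = d i" if "i < n" for i using that by (simp add: u_def the_inv_into_f_f[OF inj])
    thus "c = d" using PiE_arb[OF c] PiE_arb[OF d] by (metis ext lessThan_iff)
  qed simp
next
  fix c :: "nat \<Rightarrow> 'a"
  show "(\<Sum>i<n. c i *s e i) \<in> span (e ` {..<n})"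
    by (intro span_sum span_scale span_base) auto
next
  fix x assume "x \<in> span (e ` {..<n})"
  then obtain u where "x = (\<Sum>v\<in>e ` {..<n}. u v *s v)"
    using span_finite[of "e ` {..<n}"] by auto
  also have "\<dots> = (\<Sum>i<n. restrict (\<lambda>i. u (e i)) {..<n} i *s e i)"
    by (simp add: sum.reindex[OF inj])
  finally show "\<exists>c\<in>{..<n} \<rightarrow>\<^sub>E UNIV. x = (\<Sum>i<n. c i *s e i)"
    by (intro bexI[of _ "restrict (\<lambda>i. u (e i)) {..<n}"]) auto
qed

lemma card_subspace:
  fixes s :: "'a::{field,finite} \<Rightarrow> 'b::{ab_group_add,finite} \<Rightarrow> 'b"
  assumes "vector_space s" and V: "module.subspace s V"
  shows "card V = CARD('a) ^ vector_space.dim s V"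
proof -
  interpret vector_space s by fact
  obtain B where B: "B \<subseteq> V" "independent B" "V \<subseteq> span B" "card B = dim V"
    using basis_exists by blast
  obtain e where e: "bij_betw e {..<card B} B"
    using ex_bij_betw_nat_finite[of B] by (auto simp: atLeast0LessThan)
  hence "inj_on e {..<card B}" and e_B: "e ` {..<card B} = B" by (auto simp: bij_betw_def)
  hence "card ({..<card B} \<rightarrow>\<^sub>E (UNIV::'a set)) = card (span B)"
    using bij_betw_same_card[OF bij_betw_coeffs_span] B(2) by metis
  moreover have "span B = V" using B V by (simp add: span_subspace)
  ultimately show ?thesis using B(4) by (simp add: card_PiE)
qed

lemma exists_subspace_card:
  fixes s :: "'a::{field,finite} \<Rightarrow> 'b::{ab_group_add,finite} \<Rightarrow> 'b"
  assumes "vector_space s" and "j \<le> vector_space.dim s (UNIV::'b set)"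
  obtains W where "module.subspace s W" and "card W = CARD('a) ^ j"
proof -
  interpret vector_space s by fact
  obtain B where B: "independent B" "card B = dim (UNIV::'b set)"
    using basis_exists[of UNIV] by blast
  obtain B' where B': "B' \<subseteq> B" "card B' = j"
    using obtain_subset_with_card_n[of j B] assms(2) B(2) by auto
  have "dim (span B') = j"
    using dim_span_eq_card_independent[OF independent_mono[OF B(1) B'(1)]] B'(2) by simp
  thus ?thesis using card_subspace[OF assms(1), of "span B'"] that[of "span B'"] by simp
qed

lemma dim_UNIV_eq_if_card_eq:
  fixes s :: "'a::{field,finite} \<Rightarrow> 'b::{ab_group_add,finite} \<Rightarrow> 'b"
  assumes "vector_space s" and "CARD('b) = CARD('a) ^ k"
  shows "vector_space.dim s (UNIV::'b set) = k"
proof -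
  interpret vector_space s by fact
  have "CARD('a) ^ dim (UNIV::'b set) = CARD('a) ^ k"
    using card_subspace[OF assms(1) subspace_UNIV] assms(2) by simp
  thus ?thesis using card_field_ge_2[where 'a='a] by (simp add: power_inject_exp)
qed

lemma vector_space_fscale: "vector_space (fscale :: 'a::field \<Rightarrow> ('i \<Rightarrow> 'a) \<Rightarrow> ('i \<Rightarrow> 'a))"
  unfolding fscale_def by unfold_locales (auto simp: algebra_simps fun_eq_iff)

lemma vector_space_escale: "field_emb emb \<Longrightarrow> vector_space (escale emb)"
  unfolding field_emb_def escale_def by unfold_locales (auto simp: algebra_simps)

section \<open>Field extensions and quadratic forms\<close>

lemma bij_betw_append_enumerations:
  fixes a b :: nat
  assumes f: "bij_betw f {..<a} A" and g: "bij_betw g {..<b} B" and "A \<inter> B = {}"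
  shows "bij_betw (\<lambda>i. if i < a then f i else g (i - a)) {..<a + b} (A \<union> B)"
proof -
  let ?h = "\<lambda>i. if i < a then f i else g (i - a)"
  have "bij_betw ?h {..<a} A" using f by (rule bij_betw_cong[THEN iffD1, rotated]) auto
  moreover have "bij_betw ?h {a..<a + b} B"
  proof -
    have "bij_betw (\<lambda>i. i - a) {a..<a + b} {..<b}"
      by (rule bij_betwI[where g = "\<lambda>j. j + a"]) (auto simp: Pi_iff)
    hence "bij_betw (g \<circ> (\<lambda>i. i - a)) {a..<a + b} B" using g by (rule bij_betw_trans)
    thus ?thesis by (rule bij_betw_cong[THEN iffD1, rotated]) auto
  qed
  ultimately have "bij_betw ?h ({..<a} \<union> {a..<a + b}) (A \<union> B)"
    using assms(3) by (rule bij_betw_combine)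
  moreover have "{..<a} \<union> {a..<a + b} = {..<a + b}" by auto
  ultimately show ?thesis by simp
qed

locale field_ext =
  fixes emb :: "'a::{field,finite} \<Rightarrow> 'b::field"
  assumes field_emb: "field_emb emb"
begin

lemma emb_add: "emb (x + y) = emb x + emb y"
  using field_emb unfolding field_emb_def by auto

lemma emb_mult: "emb (x * y) = emb x * emb y"
  using field_emb unfolding field_emb_def by auto

lemma emb_1: "emb 1 = 1"
  using field_emb unfolding field_emb_def by auto

lemma inj_emb: "inj emb"
  using field_emb unfolding field_emb_def by auto

lemma emb_0: "emb 0 = 0"
  using emb_add[of 0 0] by (metis add.right_neutral add_left_cancel)

lemma emb_pow: "emb (x ^ n) = emb x ^ n"
  by (induction n) (simp_all add: emb_1 emb_mult)

lemma emb_of_nat: "emb (of_nat n) = of_nat n"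
  by (induction n) (simp_all add: emb_0 emb_1 emb_add)

sublocale V: vector_space "escale emb"
  by (rule vector_space_escale[OF field_emb])

lemma unique_coordinates:
  fixes e :: "nat \<Rightarrow> 'b"
  assumes "inj_on e {..<n}" and "\<not> V.dependent (e ` {..<n})" and "V.span (e ` {..<n}) = UNIV"
  shows "\<exists>!c. c \<in> {..<n} \<rightarrow>\<^sub>E UNIV \<and> x = (\<Sum>i<n. emb (c i) * e i)"
  using V.bij_betw_coeffs_span[OF assms(1,2)] assms(3)
  unfolding escale_def bij_betw_def inj_on_def by blast

end

lemma card_zeros_diag:
  fixes emb :: "'a::{field,finite} \<Rightarrow> 'b::field" and Q :: "'b \<Rightarrow> 'a"
  assumes diag: "qf_diag emb n Q e lam r" and "r \<le> n"
  shows "card {x. Q x = 0} = CARD('a) ^ (n - r) * diag_count lam r 0"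
proof -
  define \<phi> where "\<phi> c = (\<Sum>i<n. emb (c i) * e i)" for c :: "nat \<Rightarrow> 'a"
  have coords: "\<forall>x. \<exists>!c. c \<in> {..<n} \<rightarrow>\<^sub>E UNIV \<and> x = \<phi> c"
    and Q_\<phi>: "\<forall>c. Q (\<phi> c) = (\<Sum>i<r. lam i * (c i) ^ 2)"
    using diag unfolding qf_diag_def \<phi>_def by auto
  have "bij_betw \<phi> ({..<n} \<rightarrow>\<^sub>E UNIV) UNIV"
    using coords by (intro bij_betwI') blast+
  hence "bij_betw \<phi> {c \<in> {..<n} \<rightarrow>\<^sub>E UNIV. Q (\<phi> c) = 0} {x. Q x = 0}"
    by (auto simp: bij_betw_def inj_on_def)
  hence "card {x. Q x = 0} = card {c \<in> {..<n} \<rightarrow>\<^sub>E (UNIV::'a set). (\<Sum>i<r. lam i * c i ^ 2) = 0}"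
    using Q_\<phi> by (simp add: bij_betw_same_card)
  also have "\<dots> = CARD('a) ^ (n - r) * diag_count lam r 0"
    by (rule card_diag_solutions_extend[OF assms(2)])
  finally show ?thesis .
qed

locale ext_quadratic_form = field_ext emb
  for emb :: "'a::{field,finite} \<Rightarrow> 'b::{field,finite}" +
  fixes Q :: "'b \<Rightarrow> 'a"
  assumes quadratic_form: "is_quadratic_form emb Q" and odd_card: "odd CARD('a)"
begin

abbreviation B where "B \<equiv> qf_bil Q"

lemma Q_scale: "Q (emb a * x) = a ^ 2 * Q x"
  using quadratic_form unfolding is_quadratic_form_def by auto

lemma B_add_left: "B (x + x') y = B x y + B x' y"
  using quadratic_form unfolding is_quadratic_form_def by auto

lemma B_add_right: "B x (y + y') = B x y + B x y'"
  using quadratic_form unfolding is_quadratic_form_def by auto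

lemma B_scale_left: "B (emb a * x) y = a * B x y"
  using quadratic_form unfolding is_quadratic_form_def by auto

lemma B_scale_right: "B x (emb a * y) = a * B x y"
  using quadratic_form unfolding is_quadratic_form_def by auto

lemma B_commute: "B x y = B y x"
  unfolding qf_bil_def by (simp add: add.commute)

lemma B_0_left: "B 0 y = 0"
  using B_add_left[of 0 0 y] by (metis add.right_neutral add_left_cancel)

lemma B_0_right: "B x 0 = 0"
  using B_add_right[of x 0 0] by (metis add.right_neutral add_left_cancel)

lemma B_diff_right: "B x (y - y') = B x y - B x y'"
  using B_add_right[of x "y - y'" y'] by simp

lemma B_sum_right: "B x (\<Sum>i\<in>I. f i) = (\<Sum>i\<in>I. B x (f i))"
  by (induction I rule: infinite_finite_induct) (auto simp: B_0_right B_add_right)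

lemma Q_0: "Q 0 = 0"
  using Q_scale[of 0 0] emb_0 by simp

lemma Q_eq_B: "Q x = B x x"
proof -
  have "emb 2 = 2" using emb_add[of 1 1] emb_1 by simp
  hence "Q (x + x) = 4 * Q x" using Q_scale[of 2 x] by (simp add: mult_2[symmetric])
  thus ?thesis unfolding qf_bil_def using two_neq_zero[OF odd_card] by (simp add: field_simps)
qed

lemma Q_add: "Q (x + y) = Q x + Q y + 2 * B x y"
  unfolding qf_bil_def using two_neq_zero[OF odd_card] by (simp add: field_simps)

lemma B_subspace_orthogonal:
  assumes "V.subspace W"
  shows "V.subspace {w \<in> W. B v w = 0}"
proof (rule V.subspaceI)
  show "0 \<in> {w \<in> W. B v w = 0}" using V.subspace_0[OF assms] by (simp add: B_0_right)
qed (use V.subspace_add[OF assms] V.subspace_scale[OF assms] in \<open>auto simp: B_add_right B_scale_right escale_def\<close>)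

lemma orthogonal_projection_anisotropic:
  assumes "V.subspace W" and "v \<in> W" and "Q v \<noteq> 0" and "w \<in> W"
  shows "w - escale emb (B v w / Q v) v \<in> {u \<in> W. B v u = 0}"
  using V.subspace_diff[OF assms(1,4) V.subspace_scale[OF assms(1,2)]] assms(3)
  by (simp add: escale_def B_diff_right B_scale_right Q_eq_B[symmetric])

text \<open>Gram--Schmidt: split off an anisotropic vector \<open>v\<close> and recurse on its orthogonal
  complement; if there is none, \<open>B\<close> vanishes identically on \<open>W\<close> by polarization.\<close>

lemma exists_orthogonal_basis:
  assumes "V.subspace W"
  shows "\<exists>S. S \<subseteq> W \<and> \<not> V.dependent S \<and> W \<subseteq> V.span S \<and> (\<forall>x\<in>S. \<forall>y\<in>S. x \<noteq> y \<longrightarrow> B x y = 0)"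
  using assms
proof (induction "card W" arbitrary: W rule: less_induct)
  case less
  show ?case
  proof (cases "\<forall>x\<in>W. Q x = 0")
    case True
    obtain S where S: "S \<subseteq> W" "\<not> V.dependent S" "W \<subseteq> V.span S" "card S = V.dim W"
      by (rule V.basis_exists)
    have "B x y = 0" if "x \<in> W" "y \<in> W" for x y
      using True that V.subspace_add[OF less.prems that] unfolding qf_bil_def by simp
    thus ?thesis using S by blast
  next
    case False
    then obtain v where v: "v \<in> W" "Q v \<noteq> 0" by auto
    define W' where "W' = {w \<in> W. B v w = 0}"
    have sub_W': "V.subspace W'" unfolding W'_def by (rule B_subspace_orthogonal[OF less.prems])
    have "v \<notin> W'" using v Q_eq_B unfolding W'_def by simp
    hence "W' \<subset> W" using v unfolding W'_def by auto
    hence "card W' < card W" by (simp add: psubset_card_mono)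
    then obtain S' where S': "S' \<subseteq> W'" "\<not> V.dependent S'" "W' \<subseteq> V.span S'"
        "\<forall>x\<in>S'. \<forall>y\<in>S'. x \<noteq> y \<longrightarrow> B x y = 0"
      using less.hyps[OF _ sub_W'] by blast
    have "v \<notin> V.span S'" using V.span_minimal[OF S'(1) sub_W'] \<open>v \<notin> W'\<close> by auto
    hence indep: "\<not> V.dependent (insert v S')" by (rule V.independent_insertI[OF _ S'(2)])
    have span: "W \<subseteq> V.span (insert v S')"
    proof
      fix w assume "w \<in> W"
      define c where "c = B v w / Q v"
      have "w - escale emb c v \<in> V.span S'"
        using orthogonal_projection_anisotropic[OF less.prems v \<open>w \<in> W\<close>] S'(3)
        unfolding c_def W'_def by auto
      hence "(w - escale emb c v) + escale emb c v \<in> V.span (insert v S')"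
        by (intro V.span_add V.span_scale) (auto intro: V.span_base V.span_mono[THEN subsetD, rotated])
      thus "w \<in> V.span (insert v S')" by simp
    qed
    have "B v s = 0" if "s \<in> S'" for s using that S'(1) unfolding W'_def by auto
    hence "\<forall>x\<in>insert v S'. \<forall>y\<in>insert v S'. x \<noteq> y \<longrightarrow> B x y = 0"
      using S'(4) B_commute by auto
    moreover have "insert v S' \<subseteq> W" using v S'(1) unfolding W'_def by auto
    ultimately show ?thesis using indep span by blast
  qed
qed

lemma Q_sum_orthogonal:
  assumes "finite I" "\<forall>i\<in>I. \<forall>j\<in>I. i \<noteq> j \<longrightarrow> B (e i) (e j) = 0"
  shows "Q (\<Sum>i\<in>I. emb (c i) * e i) = (\<Sum>i\<in>I. c i ^ 2 * Q (e i))"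
  using assms
proof (induction I rule: finite_induct)
  case empty
  thus ?case by (simp add: Q_0)
next
  case (insert j I)
  have "B (emb (c j) * e j) (\<Sum>i\<in>I. emb (c i) * e i) = (\<Sum>i\<in>I. c i * (c j * B (e j) (e i)))"
    by (simp add: B_sum_right B_scale_left B_scale_right)
  also have "\<dots> = 0"
    using insert.prems insert.hyps by (intro sum.neutral) auto
  finally have "B (emb (c j) * e j) (\<Sum>i\<in>I. emb (c i) * e i) = 0" .
  moreover have "\<forall>i\<in>I. \<forall>j\<in>I. i \<noteq> j \<longrightarrow> B (e i) (e j) = 0"
    using insert.prems by auto
  ultimately show ?case using insert.hyps insert.IH by (simp add: Q_add Q_scale)
qed

lemma B_orthogonal_coordinate:
  fixes n :: nat
  assumes "\<forall>i<n. \<forall>j<n. i \<noteq> j \<longrightarrow> B (e i) (e j) = 0" and "i < n"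
  shows "B (e i) (\<Sum>j<n. emb (d j) * e j) = d i * Q (e i)"
proof -
  have "B (e i) (\<Sum>j<n. emb (d j) * e j) = (\<Sum>j<n. d j * B (e i) (e j))"
    by (simp add: B_sum_right B_scale_right)
  also have "\<dots> = d i * B (e i) (e i) + (\<Sum>j\<in>{..<n} - {i}. d j * B (e i) (e j))"
    using assms(2) by (subst sum.remove[of _ i]) auto
  also have "(\<Sum>j\<in>{..<n} - {i}. d j * B (e i) (e j)) = 0"
    using assms by (intro sum.neutral) auto
  finally show ?thesis using Q_eq_B[of "e i"] by simp
qed

lemma exists_orthogonal_enumeration:
  assumes "CARD('b) = CARD('a) ^ n"
  obtains e k where "inj_on e {..<n}" and "\<not> V.dependent (e ` {..<n})"
    and "V.span (e ` {..<n}) = UNIV" and "\<forall>i<n. \<forall>j<n. i \<noteq> j \<longrightarrow> B (e i) (e j) = 0"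
    and "k \<le> n" and "\<forall>i<k. Q (e i) \<noteq> 0" and "\<forall>i. k \<le> i \<and> i < n \<longrightarrow> Q (e i) = 0"
proof -
  obtain S where S: "\<not> V.dependent S" "UNIV \<subseteq> V.span S"
    and orth: "\<forall>x\<in>S. \<forall>y\<in>S. x \<noteq> y \<longrightarrow> B x y = 0"
    using exists_orthogonal_basis[OF V.subspace_UNIV] by blast
  have "card S = n"
    using V.basis_card_eq_dim[of S UNIV] S dim_UNIV_eq_if_card_eq[OF vector_space_escale[OF field_emb] assms]
    by auto
  define S1 where "S1 = {x\<in>S. Q x \<noteq> 0}"
  define S0 where "S0 = {x\<in>S. Q x = 0}"
  have S_split: "S1 \<union> S0 = S" "S1 \<inter> S0 = {}" unfolding S1_def S0_def by auto
  hence card_S: "card S1 + card S0 = n" using \<open>card S = n\<close> card_Un_disjoint[of S1 S0] by simp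
  obtain e1 where e1: "bij_betw e1 {..<card S1} S1"
    using ex_bij_betw_nat_finite[of S1] by (auto simp: atLeast0LessThan)
  obtain e0 where e0: "bij_betw e0 {..<card S0} S0"
    using ex_bij_betw_nat_finite[of S0] by (auto simp: atLeast0LessThan)
  define e where "e i = (if i < card S1 then e1 i else e0 (i - card S1))" for i
  have "bij_betw e {..<n} S"
    using bij_betw_append_enumerations[OF e1 e0 S_split(2)] card_S S_split(1)
    unfolding e_def[abs_def] by simp
  hence inj: "inj_on e {..<n}" and e_S: "e ` {..<n} = S" by (auto simp: bij_betw_def)
  have indep: "\<not> V.dependent (e ` {..<n})" and span: "V.span (e ` {..<n}) = UNIV"
    using S e_S by auto
  have orth_e: "\<forall>i<n. \<forall>j<n. i \<noteq> j \<longrightarrow> B (e i) (e j) = 0"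
    using orth inj e_S by (auto dest: inj_onD)
  have aniso: "\<forall>i<card S1. Q (e i) \<noteq> 0"
    using e1 unfolding e_def S1_def by (auto simp: bij_betw_def)
  have iso: "\<forall>i. card S1 \<le> i \<and> i < n \<longrightarrow> Q (e i) = 0"
  proof (intro allI impI)
    fix i assume i: "card S1 \<le> i \<and> i < n"
    hence "e0 (i - card S1) \<in> S0" using e0 card_S by (auto simp: bij_betw_def)
    thus "Q (e i) = 0" using i unfolding e_def S0_def by auto
  qed
  show ?thesis using that[OF inj indep span orth_e _ aniso iso] card_S by simp
qed

lemma radical_eq_span_isotropic:
  fixes e :: "nat \<Rightarrow> 'b" and n :: nat
  assumes inj: "inj_on e {..<n}" and indep: "\<not> V.dependent (e ` {..<n})"
    and span: "V.span (e ` {..<n}) = UNIV" and orth: "\<forall>i<n. \<forall>j<n. i \<noteq> j \<longrightarrow> B (e i) (e j) = 0"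
    and "k \<le> n" and aniso: "\<forall>i<k. Q (e i) \<noteq> 0" and iso: "\<forall>i. k \<le> i \<and> i < n \<longrightarrow> Q (e i) = 0"
  shows "{x. \<forall>y. B x y = 0} = V.span (e ` {k..<n})"
proof -
  define R where "R = {x. \<forall>y. B x y = 0}"
  have coords: "\<exists>c. c \<in> {..<n} \<rightarrow>\<^sub>E UNIV \<and> x = (\<Sum>i<n. emb (c i) * e i)" for x
    using unique_coordinates[OF inj indep span] by blast
  have "e i \<in> R" if "k \<le> i" "i < n" for i
    unfolding R_def
  proof (intro CollectI allI)
    fix y
    obtain d where "y = (\<Sum>j<n. emb (d j) * e j)" using coords by blast
    thus "B (e i) y = 0" using B_orthogonal_coordinate[OF orth \<open>i < n\<close>] iso that by simp
  qed
  moreover have "V.subspace R"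
    unfolding R_def by (rule V.subspaceI) (auto simp: B_0_left B_add_left B_scale_left escale_def)
  ultimately have "V.span (e ` {k..<n}) \<subseteq> R" by (intro V.span_minimal) auto
  moreover have "R \<subseteq> V.span (e ` {k..<n})"
  proof
    fix x assume x: "x \<in> R"
    obtain c where c: "x = (\<Sum>j<n. emb (c j) * e j)" using coords by blast
    have "c i = 0" if "i < k" for i
    proof -
      have "B (e i) x = c i * Q (e i)" using B_orthogonal_coordinate[of n e i c] orth that \<open>k \<le> n\<close> c by simp
      moreover have "B (e i) x = 0" using x B_commute[of "e i" x] unfolding R_def by simp
      ultimately show ?thesis using aniso that by simp
    qed
    hence "x = (\<Sum>j\<in>{k..<n}. escale emb (c j) (e j))"
      unfolding c escale_def by (intro sum.mono_neutral_right) (auto simp: emb_0)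
    also have "\<dots> \<in> V.span (e ` {k..<n})"
      by (intro V.span_sum V.span_scale V.span_base) auto
    finally show "x \<in> V.span (e ` {k..<n})" .
  qed
  ultimately show ?thesis unfolding R_def by blast
qed

lemma qf_rank_orthogonal_enumeration:
  assumes inj: "inj_on e {..<n}" and indep: "\<not> V.dependent (e ` {..<n})"
    and span: "V.span (e ` {..<n}) = UNIV" and orth: "\<forall>i<n. \<forall>j<n. i \<noteq> j \<longrightarrow> B (e i) (e j) = 0"
    and "k \<le> n" and aniso: "\<forall>i<k. Q (e i) \<noteq> 0" and iso: "\<forall>i. k \<le> i \<and> i < n \<longrightarrow> Q (e i) = 0"
  shows "qf_rank emb n Q = k"
proof -
  have "\<not> V.dependent (e ` {k..<n})"
    by (intro V.independent_mono[OF indep] image_mono) auto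
  moreover have "card (e ` {k..<n}) = n - k"
    using inj by (subst card_image) (auto intro: inj_on_subset)
  ultimately have "V.dim {x. \<forall>y. B x y = 0} = n - k"
    using radical_eq_span_isotropic[OF assms] V.dim_span_eq_card_independent by simp
  thus ?thesis unfolding qf_rank_def using \<open>k \<le> n\<close> by simp
qed

lemma exists_qf_diag:
  assumes "CARD('b) = CARD('a) ^ n"
  shows "\<exists>e lam. qf_diag emb n Q e lam (qf_rank emb n Q)"
proof -
  obtain e k where inj: "inj_on e {..<n}" and indep: "\<not> V.dependent (e ` {..<n})"
    and span: "V.span (e ` {..<n}) = UNIV" and orth: "\<forall>i<n. \<forall>j<n. i \<noteq> j \<longrightarrow> B (e i) (e j) = 0"
    and "k \<le> n" and aniso: "\<forall>i<k. Q (e i) \<noteq> 0" and iso: "\<forall>i. k \<le> i \<and> i < n \<longrightarrow> Q (e i) = 0"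
    using exists_orthogonal_enumeration[OF assms] by blast
  have "Q (\<Sum>i<n. emb (c i) * e i) = (\<Sum>i<k. Q (e i) * c i ^ 2)" for c
  proof -
    have "Q (\<Sum>i<n. emb (c i) * e i) = (\<Sum>i<n. c i ^ 2 * Q (e i))"
      using orth by (intro Q_sum_orthogonal) auto
    also have "\<dots> = (\<Sum>i<k. c i ^ 2 * Q (e i))"
      using \<open>k \<le> n\<close> iso by (intro sum.mono_neutral_right) auto
    finally show ?thesis by (simp add: mult.commute)
  qed
  hence "qf_diag emb n Q e (\<lambda>i. Q (e i)) k"
    unfolding qf_diag_def using unique_coordinates[OF inj indep span] aniso by auto
  moreover have "qf_rank emb n Q = k"
    by (rule qf_rank_orthogonal_enumeration) fact+
  ultimately show ?thesis by auto
qed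

lemma real_card_zeros:
  assumes "CARD('b) = CARD('a) ^ n"
  defines "r \<equiv> qf_rank emb n Q"
  shows "real (card {x. Q x = 0}) = real CARD('a) ^ n / real CARD('a)
     + (if even r then real_of_int (eta (-1::'a) ^ (r div 2) * qf_eps emb n Q)
          * (real CARD('a) - 1) * real CARD('a) ^ n / (real CARD('a) ^ (r div 2) * real CARD('a))
        else 0)"
proof -
  define q where "q = real CARD('a)"
  define h where "h = r div 2"
  \<comment> \<open>\<open>qf_eps\<close> is read off the diagonalisation chosen by \<open>SOME\<close>; count zeros with that one.\<close>
  define lam where "lam = (SOME lam. \<exists>e. qf_diag emb n Q e lam r)"
  have "\<exists>lam e. qf_diag emb n Q e lam r" using exists_qf_diag[OF assms(1)] unfolding r_def by blast
  hence "\<exists>e. qf_diag emb n Q e lam r" unfolding lam_def by (rule someI_ex)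
  then obtain e where diag: "qf_diag emb n Q e lam r" by blast
  have "r \<le> n" unfolding r_def qf_rank_def by simp
  have lam_nz: "\<forall>i<r. lam i \<noteq> 0" using diag unfolding qf_diag_def by auto
  have eps: "qf_eps emb n Q = eta (prod lam {..<r})"
    unfolding qf_eps_def Let_def r_def[symmetric] lam_def by simp
  have q: "q > 1" unfolding q_def by (rule real_card_gt_1)
  have "q ^ (n - r) = q ^ n / q ^ r" using q \<open>r \<le> n\<close> by (simp add: power_diff)
  hence "real (card {x. Q x = 0}) = q ^ n / q ^ r * real (diag_count lam r 0)"
    using card_zeros_diag[OF diag \<open>r \<le> n\<close>] unfolding q_def by simp
  also have "real (diag_count lam r 0) = q ^ r / q
      + (if even r then real_of_int (eta ((-1) ^ h * prod lam {..<r})) * q ^ h / q * (q - 1) else 0)"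
    using diag_count_formula[OF odd_card lam_nz, of 0] unfolding q_def h_def by simp
  also have "eta ((-1::'a) ^ h * prod lam {..<r}) = eta (-1::'a) ^ h * qf_eps emb n Q"
    unfolding eps by (simp add: eta_mult[OF odd_card] eta_power[OF odd_card])
  finally have zeros: "real (card {x. Q x = 0}) = q ^ n / q ^ r * (q ^ r / q
      + (if even r then real_of_int (eta (-1::'a) ^ h * qf_eps emb n Q) * q ^ h / q * (q - 1) else 0))" .
  show ?thesis
  proof (cases "even r")
    case True
    hence "r = h + h" unfolding h_def by presburger
    hence "q ^ r = q ^ h * q ^ h" by (simp add: power_add)
    thus ?thesis using True q unfolding zeros q_def[symmetric] h_def[symmetric] by (simp add: field_simps)
  qed (use zeros q in \<open>simp add: q_def\<close>)
qed

end

section \<open>The trace of a finite field extension\<close>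

locale ext_trace = field_ext emb
  for emb :: "'a::{field,finite} \<Rightarrow> 'c::{field,finite}" +
  fixes n p m :: nat
  assumes card_ext: "CARD('c) = CARD('a) ^ n" and n_pos: "n \<ge> 1"
    and prime_p: "prime p" and card_base: "CARD('a) = p ^ m"
begin

lemma CHAR_ext: "CHAR('c) = p"
proof -
  have "of_nat p = (0::'a)"
    using CHAR_eq_if_card_eq_prime_power[OF prime_p card_base] by (metis of_nat_CHAR)
  hence "of_nat p = (0::'c)" using emb_of_nat[of p] emb_0 by simp
  hence "CHAR('c) dvd p" by (simp add: of_nat_eq_0_iff_char_dvd)
  thus ?thesis using primes_dvd_imp_eq[OF prime_CHAR_finite[where 'a='c] prime_p] by simp
qed

lemma frobenius_add: "(x + y :: 'c) ^ (CARD('a) ^ i) = x ^ (CARD('a) ^ i) + y ^ (CARD('a) ^ i)"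
  by (rule freshmans_dream') (simp_all add: CHAR_ext prime_p card_base power_mult[symmetric])

lemma frobenius_sum: "(\<Sum>j\<in>A. f j :: 'c) ^ (CARD('a) ^ i) = (\<Sum>j\<in>A. f j ^ (CARD('a) ^ i))"
  by (rule freshmans_dream_sum') (simp_all add: CHAR_ext prime_p card_base power_mult[symmetric])

lemma emb_frobenius: "emb c ^ (CARD('a) ^ i) = emb c"
  by (simp flip: emb_pow add: power_card_power_eq_self)

definition frob_sum :: "'c \<Rightarrow> 'c" where
  "frob_sum y = (\<Sum>i<n. y ^ (CARD('a) ^ i))"

lemma frob_sum_power_card: "frob_sum y ^ CARD('a) = frob_sum y"
proof -
  have "frob_sum y ^ CARD('a) = (\<Sum>i<n. (y ^ (CARD('a) ^ i)) ^ (CARD('a) ^ 1))"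
    unfolding frob_sum_def using frobenius_sum[of _ _ 1] by simp
  also have "\<dots> = (\<Sum>i<n. y ^ (CARD('a) ^ Suc i))"
    by (simp add: power_mult[symmetric] mult.commute)
  also have "\<dots> = (\<Sum>i<Suc n. y ^ (CARD('a) ^ i)) - y"
    unfolding sum.lessThan_Suc_shift by simp
  also have "\<dots> = frob_sum y"
    using power_card_eq_self[of y, unfolded card_ext] unfolding frob_sum_def by simp
  finally show ?thesis .
qed

text \<open>The image of the base field already supplies \<open>q\<close> roots of \<open>X^q - X\<close>, which has at most \<open>q\<close>.\<close>

lemma fixed_points_eq_range_emb: "{z::'c. z ^ CARD('a) = z} = range emb"
proof -
  define P :: "'c poly" where "P = monom 1 CARD('a) - [:0, 1:]"
  have "coeff P CARD('a) = 1"
    using card_field_ge_2[where 'a='a] unfolding P_def by (simp add: coeff_pCons split: nat.split)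
  hence P_nz: "P \<noteq> 0" by auto
  have "degree P \<le> CARD('a)" unfolding P_def
    by (rule degree_le) (auto simp: coeff_pCons split: nat.split)
  moreover have "poly P z = z ^ CARD('a) - z" for z unfolding P_def by (simp add: poly_monom)
  ultimately have "card {z::'c. z ^ CARD('a) = z} \<le> CARD('a)"
    using card_poly_roots_bound[OF P_nz] by simp
  moreover have "range emb \<subseteq> {z::'c. z ^ CARD('a) = z}" using emb_frobenius[of _ 1] by auto
  moreover have "card (range emb) = CARD('a)" using card_image[OF inj_emb] by simp
  ultimately show ?thesis by (metis card_subset_eq finite le_antisym card_mono)
qed

lemma emb_trace: "emb (trace emb n y) = frob_sum y"
proof -
  have "frob_sum y \<in> range emb" using frob_sum_power_card fixed_points_eq_range_emb by auto
  thus ?thesis unfolding trace_def frob_sum_def[symmetric] by (rule f_the_inv_into_f[OF inj_emb])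
qed

lemma trace_add: "trace emb n (y + z) = trace emb n y + trace emb n z"
proof -
  have "frob_sum (y + z) = frob_sum y + frob_sum z"
    unfolding frob_sum_def by (simp add: frobenius_add sum.distrib)
  thus ?thesis using inj_emb by (simp add: emb_trace emb_add flip: inj_eq)
qed

lemma trace_scale: "trace emb n (emb c * y) = c * trace emb n y"
proof -
  have "frob_sum (emb c * y) = emb c * frob_sum y"
    unfolding frob_sum_def by (simp add: power_mult_distrib emb_frobenius sum_distrib_left)
  thus ?thesis using inj_emb by (simp add: emb_trace emb_mult flip: inj_eq)
qed

lemma trace_0: "trace emb n 0 = 0"
  using trace_add[of 0 0] by (metis add.right_neutral add_left_cancel)

lemma trace_diff: "trace emb n (y - z) = trace emb n y - trace emb n z"
  using trace_add[of "y - z" z] by simp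

text \<open>The trace is not identically zero, since \<open>frob_sum\<close> is a nonzero polynomial of degree
  \<open>q^(n-1)\<close> and so has fewer roots than the extension has elements.\<close>

lemma exists_trace_nonzero: "\<exists>y. trace emb n y \<noteq> 0"
proof (rule ccontr)
  assume "\<not> (\<exists>y. trace emb n y \<noteq> 0)"
  hence all_zero: "frob_sum y = 0" for y using emb_trace[of y] emb_0 by auto
  define P :: "'c poly" where "P = (\<Sum>i<n. monom 1 (CARD('a) ^ i))"
  have coeff_P: "coeff P j = (\<Sum>i<n. if CARD('a) ^ i = j then 1 else 0)" for j
    unfolding P_def by (simp add: coeff_sum)
  have pow_inj: "CARD('a) ^ i = CARD('a) ^ j \<longleftrightarrow> i = j" for i j
    using card_field_ge_2[where 'a='a] by (simp add: power_inject_exp)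
  have pow_le: "CARD('a) ^ i \<le> CARD('a) ^ (n - 1)" if "i < n" for i
    using that card_field_ge_2[where 'a='a] by (intro power_increasing) auto
  have "coeff P (CARD('a) ^ (n - 1)) = 1"
    unfolding coeff_P pow_inj using n_pos by simp
  hence P_nz: "P \<noteq> 0" by auto
  have "degree P \<le> CARD('a) ^ (n - 1)"
  proof (rule degree_le, intro allI impI)
    fix j assume "CARD('a) ^ (n - 1) < j"
    hence "CARD('a) ^ i \<noteq> j" if "i < n" for i using pow_le[OF that] by auto
    thus "coeff P j = 0" unfolding coeff_P by (intro sum.neutral) auto
  qed
  moreover have "poly P z = frob_sum z" for z
    unfolding P_def frob_sum_def by (simp add: poly_sum poly_monom)
  ultimately have "CARD('c) \<le> CARD('a) ^ (n - 1)"
    using card_poly_roots_bound[OF P_nz] all_zero by simp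
  moreover have "CARD('a) ^ (n - 1) < CARD('a) ^ n"
    using card_field_ge_2[where 'a='a] n_pos by (intro power_strict_increasing) auto
  ultimately show False using card_ext by simp
qed

text \<open>All fibres of the surjective \<open>F_q\<close>-linear map \<open>y \<mapsto> Tr(b y)\<close> are translates of its
  kernel, hence equinumerous.\<close>

lemma card_trace_fiber:
  assumes "b \<noteq> 0"
  shows "card {y::'c. trace emb n (b * y) = t} = CARD('a) ^ (n - 1)"
proof -
  obtain y1 where y1: "trace emb n y1 \<noteq> 0" using exists_trace_nonzero by blast
  define F where "F t = {y::'c. trace emb n (b * y) = t}" for t
  have card_F: "card (F t) = card (F 0)" for t
  proof -
    define yt where "yt = emb (t / trace emb n y1) * y1 / b"
    have yt: "trace emb n (b * yt) = t"
      using assms y1 unfolding yt_def by (simp add: trace_scale)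
    have "F t = (\<lambda>y. y + yt) ` F 0"
    proof (rule set_eqI, rule iffI)
      fix y assume "y \<in> F t"
      hence "y - yt \<in> F 0" unfolding F_def using yt by (simp add: algebra_simps trace_diff)
      thus "y \<in> (\<lambda>y. y + yt) ` F 0" by (intro image_eqI[of _ _ "y - yt"]) auto
    qed (auto simp: F_def yt algebra_simps trace_add)
    thus ?thesis by (simp add: card_image inj_on_def)
  qed
  have "UNIV = (\<Union>t. F t)" unfolding F_def by auto
  hence "CARD('c) = card (\<Union>t. F t)" by simp
  also have "\<dots> = (\<Sum>t\<in>UNIV. card (F t))"
    by (rule card_UN_disjoint) (auto simp: F_def)
  also have "\<dots> = (\<Sum>t\<in>(UNIV::'a set). card (F 0))" by (rule sum.cong[OF refl card_F])
  finally have "CARD('a) * CARD('a) ^ (n - 1) = CARD('a) * card (F 0)"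
    using card_ext n_pos by (simp add: power_eq_if)
  hence "card (F 0) = CARD('a) ^ (n - 1)" using card_field_ge_2[where 'a='a] by simp
  thus ?thesis using card_F[of t] unfolding F_def by simp
qed

end

section \<open>Supports of subspaces of \<open>F_q^I\<close>\<close>

definition hamming_weight :: "'i set \<Rightarrow> ('i \<Rightarrow> 'a::zero) \<Rightarrow> nat" where
  "hamming_weight I g = card {i \<in> I. g i \<noteq> 0}"

lemma bij_betw_split_coordinate:
  fixes K :: "('i \<Rightarrow> 'a::field) set"
  assumes K: "module.subspace fscale K" and "g1 \<in> K" and "g1 i = 1"
  shows "bij_betw (\<lambda>(t, h). fscale t g1 + h) ((UNIV::'a set) \<times> {g\<in>K. g i = 0}) K"
proof -
  interpret F: vector_space "fscale :: 'a \<Rightarrow> ('i \<Rightarrow> 'a) \<Rightarrow> ('i \<Rightarrow> 'a)"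
    by (rule vector_space_fscale)
  show ?thesis
  proof (rule bij_betwI')
    fix x y assume "x \<in> (UNIV::'a set) \<times> {g\<in>K. g i = 0}" "y \<in> (UNIV::'a set) \<times> {g\<in>K. g i = 0}"
    then obtain t h t' h' where xy: "x = (t, h)" "y = (t', h')" "h i = 0" "h' i = 0" by auto
    show "((\<lambda>(t, h). fscale t g1 + h) x = (\<lambda>(t, h). fscale t g1 + h) y) = (x = y)"
    proof
      assume eq: "(\<lambda>(t, h). fscale t g1 + h) x = (\<lambda>(t, h). fscale t g1 + h) y"
      hence "(fscale t g1 + h) i = (fscale t' g1 + h') i" unfolding xy by simp
      hence "t = t'" using xy \<open>g1 i = 1\<close> by (simp add: fscale_def)
      thus "x = y" using eq unfolding xy by simp
    qed simp
  next
    fix x assume "x \<in> (UNIV::'a set) \<times> {g\<in>K. g i = 0}"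
    thus "(\<lambda>(t, h). fscale t g1 + h) x \<in> K"
      using F.subspace_add[OF K F.subspace_scale[OF K \<open>g1 \<in> K\<close>]] by auto
  next
    fix g assume "g \<in> K"
    have "g - fscale (g i) g1 \<in> {g\<in>K. g i = 0}"
      using F.subspace_diff[OF K \<open>g \<in> K\<close> F.subspace_scale[OF K \<open>g1 \<in> K\<close>]] \<open>g1 i = 1\<close>
      by (simp add: fscale_def)
    thus "\<exists>x\<in>(UNIV::'a set) \<times> {g\<in>K. g i = 0}. g = (\<lambda>(t, h). fscale t g1 + h) x"
      by (intro bexI[of _ "(g i, g - fscale (g i) g1)"]) auto
  qed
qed

lemma card_subspace_nonzero_at:
  fixes K :: "('i \<Rightarrow> 'a::{field,finite}) set"
  assumes K: "module.subspace fscale K" and card_K: "card K = CARD('a) ^ r" and "r \<ge> 1"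
    and "g0 \<in> K" and "g0 i \<noteq> 0"
  shows "card {g\<in>K. g i \<noteq> 0} = CARD('a) ^ r - CARD('a) ^ (r - 1)"
proof -
  interpret F: vector_space "fscale :: 'a \<Rightarrow> ('i \<Rightarrow> 'a) \<Rightarrow> ('i \<Rightarrow> 'a)"
    by (rule vector_space_fscale)
  define K0 where "K0 = {g\<in>K. g i = 0}"
  have "fscale (inverse (g0 i)) g0 \<in> K" "fscale (inverse (g0 i)) g0 i = 1"
    using F.subspace_scale[OF K \<open>g0 \<in> K\<close>] \<open>g0 i \<noteq> 0\<close> by (auto simp: fscale_def)
  hence "card ((UNIV::'a set) \<times> K0) = card K"
    unfolding K0_def by (rule bij_betw_same_card[OF bij_betw_split_coordinate[OF K]])
  hence "CARD('a) * card K0 = CARD('a) * CARD('a) ^ (r - 1)"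
    using card_K \<open>r \<ge> 1\<close> by (simp add: card_cartesian_product power_eq_if)
  hence "card K0 = CARD('a) ^ (r - 1)" by simp
  moreover have "{g\<in>K. g i \<noteq> 0} = K - K0" unfolding K0_def by auto
  moreover have "finite K" using card_K by (intro card_ge_0_finite) simp
  ultimately show ?thesis using card_K by (simp add: card_Diff_subset K0_def)
qed

text \<open>Double counting of the pairs \<open>(g, i)\<close> with \<open>g i \<noteq> 0\<close>.\<close>

lemma sum_hamming_weight_subspace:
  fixes K :: "('i \<Rightarrow> 'a::{field,finite}) set"
  assumes "finite I" and K: "module.subspace fscale K" and card_K: "card K = CARD('a) ^ r" and "r \<ge> 1"
  shows "(\<Sum>g\<in>K. hamming_weight I g) = card (supp_sub I K) * (CARD('a) ^ r - CARD('a) ^ (r - 1))"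
proof -
  have "finite K" using card_K by (intro card_ge_0_finite) simp
  have "(\<Sum>g\<in>K. hamming_weight I g) = (\<Sum>g\<in>K. \<Sum>i\<in>I. if g i \<noteq> 0 then 1 else 0)"
    unfolding hamming_weight_def using \<open>finite I\<close> by (simp add: sum.inter_filter[symmetric])
  also have "\<dots> = (\<Sum>i\<in>I. card {g\<in>K. g i \<noteq> 0})"
    using \<open>finite K\<close> by (subst sum.swap) (simp add: sum.inter_filter[symmetric])
  also have "\<dots> = (\<Sum>i\<in>supp_sub I K. CARD('a) ^ r - CARD('a) ^ (r - 1))"
  proof (rule sum.mono_neutral_cong_right)
    show "\<forall>i\<in>I - supp_sub I K. card {g\<in>K. g i \<noteq> 0} = 0"
      unfolding supp_sub_def by (auto simp: card_eq_0_iff)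
    show "card {g\<in>K. g i \<noteq> 0} = CARD('a) ^ r - CARD('a) ^ (r - 1)" if "i \<in> supp_sub I K" for i
      using that card_subspace_nonzero_at[OF K card_K \<open>r \<ge> 1\<close>] unfolding supp_sub_def by blast
  qed (use \<open>finite I\<close> in \<open>auto simp: supp_sub_def\<close>)
  finally show ?thesis by simp
qed

section \<open>The code \<open>C_Q\<close>\<close>

definition codeword :: "('a::{field,finite} \<Rightarrow> 'c::field) \<Rightarrow> nat \<Rightarrow> ('b::zero \<Rightarrow> 'a) \<Rightarrow> 'a \<Rightarrow> 'c
    \<Rightarrow> ('b \<times> 'c \<Rightarrow> 'a)" where
  "codeword emb2 m2 Q a b = (\<lambda>(x, y). if (x, y) \<in> Fstar then a * Q x + trace emb2 m2 (b * y) else 0)"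

lemma code_Q_eq: "code_Q emb2 m2 Q = {codeword emb2 m2 Q a b | a b. True}"
  unfolding code_Q_def codeword_def by simp

locale ext_code = Q1: ext_quadratic_form emb1 Q + T2: ext_trace emb2 m2 p m
  for emb1 :: "'a::{field,finite} \<Rightarrow> 'b::{field,finite}" and Q :: "'b \<Rightarrow> 'a"
    and emb2 :: "'a \<Rightarrow> 'c::{field,finite}" and m2 p m :: nat +
  fixes m1 :: nat
  assumes card_b: "CARD('b) = CARD('a) ^ m1" and Q_nonzero: "Q \<noteq> (\<lambda>_. 0)"
begin

abbreviation c where "c \<equiv> codeword emb2 m2 Q"
abbreviation tr where "tr \<equiv> trace emb2 m2"
abbreviation wt where "wt \<equiv> hamming_weight (Fstar :: ('b \<times> 'c) set)"
abbreviation N0 where "N0 \<equiv> card {x::'b. Q x = 0}"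

sublocale F: vector_space "fscale :: 'a \<Rightarrow> ('b \<times> 'c \<Rightarrow> 'a) \<Rightarrow> ('b \<times> 'c \<Rightarrow> 'a)"
  by (rule vector_space_fscale)

lemma codeword_add: "c a b + c a' b' = c (a + a') (b + b')"
  unfolding codeword_def by (auto simp: fun_eq_iff T2.trace_add algebra_simps)

lemma codeword_diff: "c a b - c a' b' = c (a - a') (b - b')"
  unfolding codeword_def by (auto simp: fun_eq_iff T2.trace_diff algebra_simps)

lemma fscale_codeword: "fscale t (c a b) = c (t * a) (emb2 t * b)"
  unfolding codeword_def fscale_def
  by (auto simp: fun_eq_iff T2.trace_scale[symmetric] algebra_simps mult.left_commute)

lemma codeword_0_0: "c 0 0 = 0"
  unfolding codeword_def by (auto simp: fun_eq_iff T2.trace_0)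

lemma wt_codeword: "wt (c a b) = card {(x, y). a * Q x + tr (b * y) \<noteq> 0}"
  unfolding hamming_weight_def codeword_def Fstar_def using Q1.Q_0 T2.trace_0
  by (auto split: if_splits intro!: arg_cong[where f = card])

lemma wt_codeword_linear:
  assumes "b \<noteq> 0"
  shows "wt (c a b) = CARD('a) ^ m1 * (CARD('a) ^ m2 - CARD('a) ^ (m2 - 1))"
proof -
  have "{(x, y). a * Q x + tr (b * y) \<noteq> 0} = (SIGMA x:UNIV. UNIV - {y. tr (b * y) = - (a * Q x)})"
    by (auto simp: add_eq_0_iff)
  hence "wt (c a b) = (\<Sum>x\<in>(UNIV::'b set). CARD('c) - card {y. tr (b * y) = - (a * Q x)})"
    unfolding wt_codeword by (simp add: card_Diff_subset)
  thus ?thesis using T2.card_trace_fiber[OF assms] T2.card_ext card_b by simp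
qed

lemma wt_codeword_quadratic:
  assumes "a \<noteq> 0"
  shows "wt (c a 0) = (CARD('a) ^ m1 - N0) * CARD('a) ^ m2"
proof -
  have "{(x, y). a * Q x + tr (0 * y) \<noteq> 0} = (UNIV - {x. Q x = 0}) \<times> (UNIV :: 'c set)"
    using assms T2.trace_0 by auto
  thus ?thesis unfolding wt_codeword using card_b T2.card_ext
    by (simp add: card_cartesian_product card_Diff_subset)
qed

lemma N0_less: "N0 < CARD('a) ^ m1"
proof -
  obtain x where "Q x \<noteq> 0" using Q_nonzero by auto
  hence "{x. Q x = 0} \<subset> (UNIV::'b set)" by auto
  thus ?thesis using card_b by (metis finite psubset_card_mono)
qed

lemma codeword_eq_0_iff: "c a b = 0 \<longleftrightarrow> a = 0 \<and> b = 0"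
proof
  assume "c a b = 0"
  hence wt0: "wt (c a b) = 0" by (simp add: hamming_weight_def)
  have "CARD('a) ^ (m2 - 1) < CARD('a) ^ m2"
    using card_field_ge_2[where 'a='a] T2.n_pos by (intro power_strict_increasing) auto
  hence "b = 0" using wt0 wt_codeword_linear[of b a] by (cases "b = 0") auto
  moreover have "a = 0" using wt0 wt_codeword_quadratic[of a] N0_less \<open>b = 0\<close> by (cases "a = 0") auto
  ultimately show "a = 0 \<and> b = 0" by simp
qed (simp add: codeword_0_0)

lemma codeword_eq_iff: "c a b = c a' b' \<longleftrightarrow> a = a' \<and> b = b'"
  using codeword_eq_0_iff[of "a - a'" "b - b'"] codeword_diff[of a b a' b'] by auto

section \<open>Subcodes of \<open>C_Q\<close>\<close>

lemma card_subcode: "F.subspace K \<Longrightarrow> card K = CARD('a) ^ F.dim K"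
  by (rule card_subspace[OF vector_space_fscale])

lemma dim_subcode_iff: "F.subspace K \<Longrightarrow> F.dim K = r \<longleftrightarrow> card K = CARD('a) ^ r"
  using card_field_ge_2[where 'a='a] by (simp add: card_subcode power_inject_exp)

lemma scalar_codewords_subcode:
  assumes K: "F.subspace K"
  shows "{a. c a 0 \<in> K} = (if c 1 0 \<in> K then UNIV else {0})"
proof (cases "c 1 0 \<in> K")
  case True
  have "c a 0 \<in> K" for a using F.subspace_scale[OF K True, of a] by (simp add: fscale_codeword T2.emb_0)
  thus ?thesis using True by auto
next
  case False
  have "a = 0" if "c a 0 \<in> K" for a
  proof (rule ccontr)
    assume "a \<noteq> 0"
    hence "c 1 0 = fscale (inverse a) (c a 0)" by (simp add: fscale_codeword T2.emb_0)
    thus False using F.subspace_scale[OF K that] False by simp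
  qed
  moreover have "c 0 0 \<in> K" using F.subspace_0[OF K] codeword_0_0 by simp
  ultimately show ?thesis using False by auto
qed

lemma bij_betw_codeword_params:
  assumes "K \<subseteq> code_Q emb2 m2 Q"
  shows "bij_betw (\<lambda>(a, b). c a b) {(a, b). c a b \<in> K} K"
proof -
  have "K \<subseteq> (\<lambda>(a, b). c a b) ` {(a, b). c a b \<in> K}"
    using assms unfolding code_Q_eq by (auto simp: image_iff)
  thus ?thesis by (auto simp: bij_betw_def inj_on_def codeword_eq_iff)
qed

lemma real_wt_codeword:
  "real (wt (c a b)) =
     (if b \<noteq> 0 then real CARD('a) ^ m1 * (real CARD('a) ^ m2 - real CARD('a) ^ m2 / real CARD('a))
      else if a \<noteq> 0 then (real CARD('a) ^ m1 - real N0) * real CARD('a) ^ m2 else 0)"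
proof -
  have "CARD('a) ^ m2 = CARD('a) * CARD('a) ^ (m2 - 1)"
    using T2.n_pos by (cases m2) auto
  hence "real (CARD('a) ^ (m2 - 1)) = real CARD('a) ^ m2 / real CARD('a)"
    by (simp flip: of_nat_power)
  moreover have "CARD('a) ^ (m2 - 1) \<le> CARD('a) ^ m2" by (simp add: power_increasing)
  ultimately show ?thesis
    using wt_codeword_linear[of b a] wt_codeword_quadratic[of a] N0_less codeword_0_0
    by (auto simp: of_nat_diff hamming_weight_def)
qed

text \<open>The codewords of \<open>K\<close> with \<open>b \<noteq> 0\<close> all have the same weight; those with \<open>b = 0\<close> are
  the multiples of \<open>Q\<close> in \<open>K\<close>.\<close>

lemma sum_wt_subcode:
  assumes K: "F.subspace K" and "K \<subseteq> code_Q emb2 m2 Q"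
  defines "A \<equiv> {a. c a 0 \<in> K}"
  shows "real (\<Sum>g\<in>K. wt g) =
     (real (card K) - real (card A)) * (real CARD('a) ^ m1 * (real CARD('a) ^ m2 - real CARD('a) ^ m2 / real CARD('a)))
     + (real (card A) - 1) * ((real CARD('a) ^ m1 - real N0) * real CARD('a) ^ m2)"
proof -
  define P where "P = {(a, b). c a b \<in> K}"
  define P0 where "P0 = (\<lambda>a. (a, 0::'c)) ` A"
  define Wb where "Wb = real CARD('a) ^ m1 * (real CARD('a) ^ m2 - real CARD('a) ^ m2 / real CARD('a))"
  define W0 where "W0 = (real CARD('a) ^ m1 - real N0) * real CARD('a) ^ m2"
  have bij: "bij_betw (\<lambda>(a, b). c a b) P K"
    unfolding P_def by (rule bij_betw_codeword_params[OF assms(2)])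
  have P0_P: "P0 \<subseteq> P" unfolding P0_def P_def A_def by auto
  have card_P0: "card P0 = card A" unfolding P0_def by (simp add: card_image inj_on_def)
  have "0 \<in> A" unfolding A_def using F.subspace_0[OF K] codeword_0_0 by simp
  have "real (\<Sum>g\<in>K. wt g) = (\<Sum>(a, b)\<in>P. real (wt (c a b)))"
    using sum.reindex_bij_betw[OF bij, of "\<lambda>g. real (wt g)"] by (simp add: case_prod_unfold)
  also have "\<dots> = (\<Sum>(a, b)\<in>P - P0. real (wt (c a b))) + (\<Sum>(a, b)\<in>P0. real (wt (c a b)))"
    by (rule sum.subset_diff[OF P0_P finite])
  also have "(\<Sum>(a, b)\<in>P - P0. real (wt (c a b))) = (\<Sum>_\<in>P - P0. Wb)"
    unfolding Wb_def by (rule sum.cong) (auto simp: real_wt_codeword P0_def P_def A_def)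
  also have "(\<Sum>(a, b)\<in>P0. real (wt (c a b))) = (\<Sum>a\<in>A. if a \<noteq> 0 then W0 else 0)"
    unfolding P0_def W0_def by (subst sum.reindex) (auto simp: inj_on_def real_wt_codeword)
  also have "\<dots> = (\<Sum>a\<in>A - {0}. W0)"
    by (rule sum.mono_neutral_cong_right) auto
  finally have "real (\<Sum>g\<in>K. wt g) = real (card (P - P0)) * Wb + real (card (A - {0})) * W0"
    by simp
  moreover have "card (P - P0) = card K - card A"
    using card_P0 P0_P bij_betw_same_card[OF bij] by (simp add: card_Diff_subset)
  moreover have "card A \<le> card K"
    using card_mono[OF finite P0_P] card_P0 bij_betw_same_card[OF bij] by simp
  moreover have "card A \<ge> 1" using \<open>0 \<in> A\<close> by (auto simp: Suc_le_eq card_gt_0_iff)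
  ultimately show ?thesis using \<open>0 \<in> A\<close> unfolding Wb_def W0_def by (simp add: of_nat_diff)
qed

definition zeros_excess :: real where
  "zeros_excess = real N0 - real CARD('a) ^ m1 / real CARD('a)"

definition supp_defect :: "nat \<Rightarrow> real" where
  "supp_defect r = zeros_excess * real CARD('a) ^ (m2 + 1) / real CARD('a) ^ r"

lemma card_supp_subcode:
  assumes K: "F.subspace K" and "K \<subseteq> code_Q emb2 m2 Q" and "F.dim K = r" and "r \<ge> 1"
  shows "real (card (supp_sub Fstar K)) =
     real CARD('a) ^ (m1 + m2) / real CARD('a) ^ r * (real CARD('a) ^ r - 1)
     - (if c 1 0 \<in> K then supp_defect r else 0)"
proof -
  define q where "q = real CARD('a)"
  define S where "S = real (card (supp_sub Fstar K))"
  have q: "q > 1" unfolding q_def by (rule real_card_gt_1)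
  have card_K: "card K = CARD('a) ^ r" using card_subcode[OF K] assms(3) by simp
  have "q ^ r = q * q ^ (r - 1)" using \<open>r \<ge> 1\<close> by (cases r) auto
  hence "q ^ r / q = q ^ (r - 1)" using q by simp
  moreover have "CARD('a) ^ (r - 1) \<le> CARD('a) ^ r" by (simp add: power_increasing)
  ultimately have "real (CARD('a) ^ r - CARD('a) ^ (r - 1)) = q ^ r - q ^ r / q"
    unfolding q_def by (simp add: of_nat_diff)
  hence "S * (q ^ r - q ^ r / q) = real (\<Sum>g\<in>K. wt g)"
    using sum_hamming_weight_subspace[OF finite K card_K \<open>r \<ge> 1\<close>] unfolding S_def by simp
  also have "\<dots> = (q ^ r - (if c 1 0 \<in> K then q else 1)) * (q ^ m1 * (q ^ m2 - q ^ m2 / q))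
      + ((if c 1 0 \<in> K then q else 1) - 1) * ((q ^ m1 - real N0) * q ^ m2)"
    using sum_wt_subcode[OF K assms(2)] scalar_codewords_subcode[OF K] card_K
    unfolding q_def by simp
  finally have "S * (q ^ r - q ^ r / q) = \<dots>" .
  moreover define x y z where "x = q ^ r" and "y = q ^ m1" and "z = q ^ m2"
  moreover have "x > 0" unfolding x_def using q by simp
  ultimately have "S = ((x - (if c 1 0 \<in> K then q else 1)) * (y * (z - z / q))
      + ((if c 1 0 \<in> K then q else 1) - 1) * ((y - real N0) * z)) / (x - x / q)"
    using q by (simp add: eq_divide_eq)
  also have "\<dots> = y * z / x * (x - 1) - (if c 1 0 \<in> K then (real N0 - y / q) * (z * q) / x else 0)"
    using q \<open>x > 0\<close> by (simp add: field_simps)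
  finally have "S = q ^ m1 * q ^ m2 / q ^ r * (q ^ r - 1)
      - (if c 1 0 \<in> K then (real N0 - q ^ m1 / q) * (q ^ m2 * q) / q ^ r else 0)"
    unfolding x_def y_def z_def .
  thus ?thesis unfolding S_def q_def supp_defect_def zeros_excess_def by (simp add: power_add)
qed

lemma subcode_product:
  assumes W: "T2.V.subspace W" and A: "A = {0} \<or> A = UNIV"
  defines "K \<equiv> (\<lambda>(a, b). c a b) ` (A \<times> W)"
  shows "K \<subseteq> code_Q emb2 m2 Q" and "F.subspace K" and "card K = card A * card W"
    and "c 1 0 \<in> K \<longleftrightarrow> 1 \<in> A"
proof -
  show "K \<subseteq> code_Q emb2 m2 Q" unfolding K_def code_Q_eq by auto
  have "0 \<in> W" by (rule T2.V.subspace_0[OF W])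
  have scale_A: "t * a \<in> A" if "a \<in> A" for t a using A that by auto
  show "F.subspace K"
  proof (rule F.subspaceI)
    show "0 \<in> K" unfolding K_def using A \<open>0 \<in> W\<close> codeword_0_0 by (auto intro!: image_eqI[of _ _ "(0, 0)"])
  next
    fix g h assume "g \<in> K" "h \<in> K"
    then obtain a b a' b' where "g = c a b" "h = c a' b'" "a \<in> A" "a' \<in> A" "b \<in> W" "b' \<in> W"
      unfolding K_def by auto
    moreover have "a + a' \<in> A" using A calculation by auto
    ultimately show "g + h \<in> K" unfolding K_def using T2.V.subspace_add[OF W]
      by (auto simp: codeword_add intro!: image_eqI[of _ _ "(a + a', b + b')"])
  next
    fix t g assume "g \<in> K"
    then obtain a b where "g = c a b" "a \<in> A" "b \<in> W" unfolding K_def by auto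
    thus "fscale t g \<in> K" unfolding K_def using scale_A T2.V.subspace_scale[OF W]
      by (auto simp: fscale_codeword escale_def intro!: image_eqI[of _ _ "(t * a, emb2 t * b)"])
  qed
  show "card K = card A * card W"
    unfolding K_def by (subst card_image) (auto simp: inj_on_def codeword_eq_iff card_cartesian_product)
  show "c 1 0 \<in> K \<longleftrightarrow> 1 \<in> A"
    unfolding K_def using A \<open>0 \<in> W\<close> by (auto simp: codeword_eq_iff)
qed

lemma exists_subspace_ext:
  assumes "j \<le> m2"
  obtains W where "T2.V.subspace W" and "card W = CARD('a) ^ j"
  using exists_subspace_card[OF vector_space_escale[OF T2.field_emb]]
    dim_UNIV_eq_if_card_eq[OF vector_space_escale[OF T2.field_emb] T2.card_ext] assms
  by metis

lemma exists_subcode_not_containing: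
  assumes "r \<le> m2"
  obtains K where "K \<subseteq> code_Q emb2 m2 Q" "F.subspace K" "F.dim K = r" "c 1 0 \<notin> K"
proof -
  obtain W where W: "T2.V.subspace W" "card W = CARD('a) ^ r"
    using exists_subspace_ext[OF assms] .
  show ?thesis
    using that subcode_product[OF W(1), of "{0}"] W(2) dim_subcode_iff by auto
qed

lemma exists_subcode_containing:
  assumes "1 \<le> r" and "r \<le> m2 + 1"
  obtains K where "K \<subseteq> code_Q emb2 m2 Q" "F.subspace K" "F.dim K = r" "c 1 0 \<in> K"
proof -
  have "r - 1 \<le> m2" using assms(2) by simp
  then obtain W where W: "T2.V.subspace W" "card W = CARD('a) ^ (r - 1)"
    by (rule exists_subspace_ext)
  have "CARD('a) * CARD('a) ^ (r - 1) = CARD('a) ^ r" using assms(1) by (cases r) auto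
  thus ?thesis
    using that subcode_product[OF W(1), of UNIV] W(2) dim_subcode_iff by auto
qed

text \<open>A subcode of dimension \<open>m2 + 1\<close> is too large to have its parameters \<open>(a, b)\<close>
  determined by \<open>b\<close> alone, so it contains two codewords differing by a multiple of \<open>Q\<close>.\<close>

lemma subcode_max_dim_contains:
  assumes "K \<subseteq> code_Q emb2 m2 Q" and K: "F.subspace K" and "F.dim K = m2 + 1"
  shows "c 1 0 \<in> K"
proof (rule ccontr)
  assume "c 1 0 \<notin> K"
  hence A: "{a. c a 0 \<in> K} = {0}" using scalar_codewords_subcode[OF K] by simp
  define P where "P = {(a, b). c a b \<in> K}"
  have "inj_on snd P"
  proof (rule inj_onI)
    fix x y assume "x \<in> P" "y \<in> P" "snd x = snd y"
    then obtain a a' b where xy: "x = (a, b)" "y = (a', b)" "c a b \<in> K" "c a' b \<in> K"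
      unfolding P_def by (metis (mono_tags, lifting) case_prodE mem_Collect_eq prod.sel(2))
    hence "c a b - c a' b \<in> K" by (simp add: F.subspace_diff[OF K])
    hence "a - a' \<in> {a. c a 0 \<in> K}" by (simp add: codeword_diff)
    hence "a = a'" using A by simp
    thus "x = y" using xy by simp
  qed
  hence "card P \<le> CARD('c)" by (rule card_inj_on_le) auto
  moreover have "card P = CARD('a) ^ (m2 + 1)"
    using bij_betw_same_card[OF bij_betw_codeword_params[OF assms(1)]] card_subcode[OF K] assms(3)
    unfolding P_def by simp
  moreover have "CARD('c) < CARD('a) ^ (m2 + 1)"
    using T2.card_ext card_field_ge_2[where 'a='a] by (simp add: power_strict_increasing)
  ultimately show False by simp
qed

lemma ghw_code_Q:
  assumes "1 \<le> r" and "r \<le> m2 + 1"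
  shows "real (ghw Fstar (code_Q emb2 m2 Q) r) =
     real CARD('a) ^ (m1 + m2) / real CARD('a) ^ r * (real CARD('a) ^ r - 1)
     - (if r \<le> m2 then max 0 (supp_defect r) else supp_defect r)"
proof -
  define V where "V = real CARD('a) ^ (m1 + m2) / real CARD('a) ^ r * (real CARD('a) ^ r - 1)"
  define S where "S = {card (supp_sub Fstar K) | K. K \<subseteq> code_Q emb2 m2 Q \<and> F.subspace K \<and> F.dim K = r}"
  have supp: "real (card (supp_sub Fstar K)) = V - (if c 1 0 \<in> K then supp_defect r else 0)"
    if "K \<subseteq> code_Q emb2 m2 Q" "F.subspace K" "F.dim K = r" for K
    using card_supp_subcode[OF that(2,1,3) assms(1)] unfolding V_def by simp
  have "S \<subseteq> {..card (Fstar :: ('b \<times> 'c) set)}"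
    unfolding S_def supp_sub_def by (auto intro!: card_mono)
  hence "finite S" by (rule finite_subset) simp
  obtain K1 where K1: "K1 \<subseteq> code_Q emb2 m2 Q" "F.subspace K1" "F.dim K1 = r" "c 1 0 \<in> K1"
    using exists_subcode_containing[OF assms] .
  have with_S: "card (supp_sub Fstar K1) \<in> S" unfolding S_def using K1 by blast
  hence "Min S \<in> S" using Min_in[OF \<open>finite S\<close>] by blast
  then obtain K where K: "K \<subseteq> code_Q emb2 m2 Q" "F.subspace K" "F.dim K = r"
      "Min S = card (supp_sub Fstar K)" unfolding S_def by blast
  have le_with: "real (Min S) \<le> V - supp_defect r"
    using Min_le[OF \<open>finite S\<close> with_S] supp[OF K1(1-3)] K1(4) by simp
  have ghw: "ghw Fstar (code_Q emb2 m2 Q) r = Min S" unfolding ghw_def S_def by simp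
  show ?thesis
  proof (cases "r \<le> m2")
    case True
    obtain K0 where K0: "K0 \<subseteq> code_Q emb2 m2 Q" "F.subspace K0" "F.dim K0 = r" "c 1 0 \<notin> K0"
      using exists_subcode_not_containing[OF True] .
    have "card (supp_sub Fstar K0) \<in> S" unfolding S_def using K0 by blast
    hence "real (Min S) \<le> V" using Min_le[OF \<open>finite S\<close>] supp[OF K0(1-3)] K0(4) by fastforce
    thus ?thesis using True ghw le_with supp[OF K(1-3)] K(4) unfolding V_def
      by (auto simp: max_def split: if_splits)
  next
    case False
    hence "c 1 0 \<in> K" using subcode_max_dim_contains[OF K(1,2)] K(3) assms(2) by simp
    thus ?thesis using False ghw supp[OF K(1-3)] K(4) unfolding V_def by simp
  qed
qed

lemma odd_p: "odd p"
proof -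
  have "m \<noteq> 0" using T2.card_base card_field_ge_2[where 'a='a] by (cases m) auto
  thus ?thesis using Q1.odd_card T2.card_base by simp
qed

lemma supp_defect_eq:
  "supp_defect r = (if even (qf_rank emb1 m1 Q)
     then real_of_int (sign_eps p m emb1 m1 Q) * (real CARD('a) - 1) * real CARD('a) ^ (m1 + m2)
          / (real CARD('a) ^ (qf_rank emb1 m1 Q div 2) * real CARD('a) ^ r)
     else 0)"
proof (cases "even (qf_rank emb1 m1 Q)")
  case True
  define q where "q = real CARD('a)"
  define h where "h = qf_rank emb1 m1 Q div 2"
  have zeros: "real N0 = q ^ m1 / q + real_of_int (sign_eps p m emb1 m1 Q) * (q - 1) * q ^ m1 / (q ^ h * q)"
    using Q1.real_card_zeros[OF card_b] sign_eps_even_rank[OF odd_p T2.card_base True] True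
    unfolding q_def h_def by simp
  have "q > 1" unfolding q_def by (rule real_card_gt_1)
  thus ?thesis using True
    unfolding supp_defect_def zeros_excess_def zeros q_def[symmetric] h_def[symmetric]
    by (simp add: field_simps power_add)
qed (simp add: Q1.real_card_zeros[OF card_b] supp_defect_def zeros_excess_def)

lemma ghw_code_Q_sign:
  assumes "1 \<le> r" and "r \<le> m2 + 1"
  defines "D \<equiv> (if even (qf_rank emb1 m1 Q)
     then real_of_int (sign_eps p m emb1 m1 Q) * (real CARD('a) - 1) * real CARD('a) ^ (m1 + m2 - r)
          / real CARD('a) ^ (qf_rank emb1 m1 Q div 2)
     else 0)"
  shows "real (ghw Fstar (code_Q emb2 m2 Q) r) =
     real CARD('a) ^ (m1 + m2 - r) * (real CARD('a) ^ r - 1) - (if r \<le> m2 then max 0 D else D)"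
proof -
  have "m1 \<ge> 1" using card_b card_field_ge_2[where 'a='b] by (cases m1) auto
  hence "real CARD('a) ^ (m1 + m2) / real CARD('a) ^ r = real CARD('a) ^ (m1 + m2 - r)"
    using assms(2) by (simp add: power_diff)
  moreover have "supp_defect r = D"
    unfolding supp_defect_eq D_def using calculation by (simp add: field_simps)
  ultimately show ?thesis using ghw_code_Q[OF assms(1,2)] by simp
qed

end

theorem theorem2:
  fixes p m m1 m2 :: nat
    and emb1 :: "'a::{field,finite} \<Rightarrow> 'b::{field,finite}"
    and emb2 :: "'a \<Rightarrow> 'c::{field,finite}"
    and Q :: "'b \<Rightarrow> 'a"
    and r :: nat
  assumes "prime p" and "odd p" and "m \<ge> 1"
    and "CARD('a) = p ^ m"
    and "m1 \<ge> 1" and "m2 \<ge> 1"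
    and "CARD('b) = (p ^ m) ^ m1" and "CARD('c) = (p ^ m) ^ m2"
    and "field_emb emb1" and "field_emb emb2"
    and "is_quadratic_form emb1 Q" and "Q \<noteq> (\<lambda>_. 0)"
    and "1 \<le> r" and "r \<le> m2 + 1"
  shows
    "let q = real (p ^ m); M = m1 + m2; rQ = qf_rank emb1 m1 Q; e = sign_eps p m emb1 m1 Q;
         d = real (ghw Fstar (code_Q emb2 m2 Q) r)
     in (even rQ \<and> e = 1 \<longrightarrow> d = q ^ (M - r) * (q ^ r - 1 - (q - 1) / q ^ (rQ div 2))) \<and>
        (even rQ \<and> e = -1 \<and> r < m2 + 1 \<longrightarrow> d = q ^ (M - r) * (q ^ r - 1)) \<and>
        (even rQ \<and> e = -1 \<and> r = m2 + 1 \<longrightarrow>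
            d = q ^ (M - r) * (q ^ r - 1 + (q - 1) / q ^ (rQ div 2))) \<and>
        (odd rQ \<longrightarrow> d = q ^ (M - r) * (q ^ r - 1))"
proof -
  interpret ext_code emb1 Q emb2 m2 p m m1
    by unfold_locales (use assms in auto)
  define q where "q = real (p ^ m)"
  define rQ where "rQ = qf_rank emb1 m1 Q"
  define e where "e = sign_eps p m emb1 m1 Q"
  define D where "D = (q - 1) * q ^ (m1 + m2 - r) / q ^ (rQ div 2)"
  have "D \<ge> 0" using real_card_gt_1[where 'a='a] assms(4) unfolding D_def q_def by simp
  have ghw: "real (ghw Fstar (code_Q emb2 m2 Q) r) = q ^ (m1 + m2 - r) * (q ^ r - 1)
      - (if r \<le> m2 then max 0 (if even rQ then e * D else 0) else (if even rQ then e * D else 0))"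
    using ghw_code_Q_sign[OF assms(13,14)] assms(4) unfolding q_def rQ_def e_def D_def
    by (simp add: mult.assoc)
  have "q ^ (m1 + m2 - r) * (q ^ r - 1 - (q - 1) / q ^ (rQ div 2)) = q ^ (m1 + m2 - r) * (q ^ r - 1) - D"
    and "q ^ (m1 + m2 - r) * (q ^ r - 1 + (q - 1) / q ^ (rQ div 2)) = q ^ (m1 + m2 - r) * (q ^ r - 1) + D"
    unfolding D_def by (simp_all add: algebra_simps)
  thus ?thesis
    unfolding Let_def q_def[symmetric] rQ_def[symmetric] e_def[symmetric] ghw
    using \<open>D \<ge> 0\<close> by auto
qed

end
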